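(* Let $N\in\mathbb N$, $\alpha,\beta>-1$, and let $\{x_j,\omega_j\}_{j=0}^N$ be the JGL nodes and weights. Then for $\mu\in(0,1)$ and $0\le i,j\le N$, $$ {}^C\mathbf D^{(\mu)}_{ij}=(1+x_i)^{1-\mu}\sum_{l=1}^N\frac{(l-1)!}{\Gamma(l+1-\mu)}\,s_{lj}\,P_{l-1}^{(\mu-1,1-\mu)}(x_i), $$ where $$ s_{lj}=\frac12\sum_{n=l-1}^N (n+\alpha+\beta+1)\,{}^{(\alpha+1,\beta+1)}C^{(0,0)}_{l-1,n-1}\,t_{nj},\qquad t_{nj}=\frac{\omega_j}{\tilde\gamma_n^{(\alpha,\beta)}}P_n^{(\alpha,\beta)}(x_j) $$ (terms with $n-1<0$ are omitted). In particular, for $\alpha=\beta=0$ one may equivalently take $$ s_{lj}=\frac{2l-1}{2}\Big\{\delta_{jN}+(-1)^l\delta_{j0}-\omega_jP_{l-1}'(x_j)\Big\}. $$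
   Context: For $\rho>0$, $(I_-^\rho u)(x)=\frac{1}{\Gamma(\rho)}\int_{-1}^x (x-y)^{\rho-1}u(y)\,dy$; for $\mu\in(0,1)$ the Caputo derivative is ${}^C D_-^\mu u=I_-^{1-\mu}(u')$. Jacobi polynomials are in Szegő's normalization: $P_n^{(\alpha,\beta)}(x)=\frac{\Gamma(n+\alpha+1)}{n!\Gamma(\alpha+1)}\,{}_2F_1\big(-n,n+\alpha+\beta+1;\alpha+1;\tfrac{1-x}{2}\big)$, $P_0^{(\alpha,\beta)}=1$, and $P_n=P_n^{(0,0)}$ (Legendre). For $\alpha,\beta>-1$, $\gamma_n^{(\alpha,\beta)}=\frac{2^{\alpha+\beta+1}\Gamma(n+\alpha+1)\Gamma(n+\beta+1)}{(2n+\alpha+\beta+1)\,n!\,\Gamma(n+\alpha+\beta+1)}$ is the squared norm of $P_n^{(\alpha,\beta)}$ in $L^2$ with weight $(1-x)^\alpha(1+x)^\beta$; $\tilde\gamma_n^{(\alpha,\beta)}=\gamma_n^{(\alpha,\beta)}$ for $0\le n\le N-1$ and $\tilde\gamma_N^{(\alpha,\beta)}=\big(2+\frac{\alpha+\beta+1}{N}\big)\gamma_N^{(\alpha,\beta)}$. Connection coefficients: for $\alpha,\beta,a,b>-1$, ${}^{(\alpha,\beta)}C^{(a,b)}_{ln}$ are the unique numbers with $P_n^{(\alpha,\beta)}=\sum_{l=0}^n {}^{(\alpha,\beta)}C^{(a,b)}_{ln}P_l^{(a,b)}$ (and they are $0$ for $l>n$). The JGL nodes $x_0<\dots<x_N$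 are the zeros of $(1-x^2)\frac{d}{dx}P_N^{(\alpha,\beta)}$ ($x_0=-1$, $x_N=1$), and the weights $\omega_j$ make $\int_{-1}^1\phi(x)(1-x)^\alpha(1+x)^\beta dx=\sum_j\phi(x_j)\omega_j$ exact for all $\phi\in\mathcal P_{2N-1}$. $h_j\in\mathcal P_N$ is the Lagrange basis polynomial ($h_j(x_i)=\delta_{ij}$), and ${}^C\mathbf D^{(\mu)}_{ij}=({}^C D_-^\mu h_j)(x_i)$, with the value at $x_0=-1$ understood as the limit. *)

theory Defs
  imports "HOL-Analysis.Analysis" "HOL-Computational_Algebra.Polynomial"
begin

text \<open>Jacobi polynomial in Szego normalization, as a real polynomial (hypergeometric sum).\<close>
definition jacobi_poly :: "real \<Rightarrow> real \<Rightarrow> nat \<Rightarrow> real poly" where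
  "jacobi_poly a b n =
     (if n = 0 then 1 else
      smult (Gamma (real n + a + 1) / (fact n * Gamma (a + 1)))
        (\<Sum>k\<le>n. smult (pochhammer (- real n) k * pochhammer (real n + a + b + 1) k
                         / (pochhammer (a + 1) k * fact k))
                   ([:1/2, -1/2:] ^ k)))"

definition jacobi_gamma :: "real \<Rightarrow> real \<Rightarrow> nat \<Rightarrow> real" where
  "jacobi_gamma a b n =
     2 powr (a + b + 1) * Gamma (real n + a + 1) * Gamma (real n + b + 1)
     / ((2 * real n + a + b + 1) * fact n * Gamma (real n + a + b + 1))"

definition jacobi_gamma_tilde :: "real \<Rightarrow> real \<Rightarrow> nat \<Rightarrow> nat \<Rightarrow> real" where
  "jacobi_gamma_tilde a b N n =
     (if n = N then (2 + (a + b + 1) / real N) * jacobi_gamma a b N else jacobi_gamma a b n)"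

definition conn_coeff :: "real \<Rightarrow> real \<Rightarrow> real \<Rightarrow> real \<Rightarrow> nat \<Rightarrow> nat \<Rightarrow> real" where
  "conn_coeff al be a b l n =
     (THE c. (\<forall>t. poly (jacobi_poly al be n) t = (\<Sum>k\<le>n. c k * poly (jacobi_poly a b k) t))
             \<and> (\<forall>k>n. c k = 0)) l"

definition frac_int :: "real \<Rightarrow> (real \<Rightarrow> real) \<Rightarrow> real \<Rightarrow> real" where
  "frac_int \<rho> u x = 1 / Gamma \<rho> * integral {-1..x} (\<lambda>y. (x - y) powr (\<rho> - 1) * u y)"

definition caputo :: "real \<Rightarrow> (real \<Rightarrow> real) \<Rightarrow> real \<Rightarrow> real" where
  "caputo \<mu> u = frac_int (1 - \<mu>) (deriv u)"

definition lagrange_basis :: "(nat \<Rightarrow> real) \<Rightarrow> nat \<Rightarrow> nat \<Rightarrow> real poly" where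
  "lagrange_basis x N j =
     (THE h. degree h \<le> N \<and> (\<forall>i\<le>N. poly h (x i) = (if i = j then 1 else 0)))"

definition caputo_matrix :: "real \<Rightarrow> (nat \<Rightarrow> real) \<Rightarrow> nat \<Rightarrow> nat \<Rightarrow> nat \<Rightarrow> real" where
  "caputo_matrix \<mu> x N i j =
     (if x i = -1 then Lim (at_right (-1)) (caputo \<mu> (poly (lagrange_basis x N j)))
      else caputo \<mu> (poly (lagrange_basis x N j)) (x i))"

definition is_JGL :: "real \<Rightarrow> real \<Rightarrow> nat \<Rightarrow> (nat \<Rightarrow> real) \<Rightarrow> (nat \<Rightarrow> real) \<Rightarrow> bool" where
  "is_JGL a b N x w \<longleftrightarrow>
     strict_mono_on {0..N} x \<and>
     x ` {0..N} = {t. (1 - t\<^sup>2) * poly (pderiv (jacobi_poly a b N)) t = 0} \<and>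
     (\<forall>\<phi> :: real poly. degree \<phi> \<le> 2 * N - 1 \<longrightarrow>
        integral {-1..1} (\<lambda>t. poly \<phi> t * (1 - t) powr a * (1 + t) powr b)
          = (\<Sum>j\<le>N. poly \<phi> (x j) * w j))"

end

theory Submission
  imports Defs
begin

text \<open>
  Expand the Lagrange basis polynomial \<open>h\<^sub>j\<close> in the Jacobi polynomials \<open>P\<^sub>n = P\<^sub>n\<^sup>(\<^sup>\<alpha>\<^sup>,\<^sup>\<beta>\<^sup>)\<close>.
  The JGL rule is exact for degree \<open>2N - 1\<close>, so the discrete inner products of the \<open>P\<^sub>n\<close> equal
  the continuous ones, except that the discrete squared norm of \<open>P\<^sub>N\<close> is
  \<open>jacobi_gamma_tilde \<alpha> \<beta> N N\<close>; as \<open>h\<^sub>j\<close> takes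
  the values \<open>\<delta>\<^sub>i\<^sub>j\<close> at the nodes, its coefficients are the \<open>t\<^sub>n\<^sub>j\<close>. Differentiating with
  \<open>P\<^sub>n' = (n + \<alpha> + \<beta> + 1)/2 P\<^sub>n\<^sub>-\<^sub>1\<^sup>(\<^sup>\<alpha>\<^sup>+\<^sup>1\<^sup>,\<^sup>\<beta>\<^sup>+\<^sup>1\<^sup>)\<close> and re-expanding in Legendre
  polynomials gives \<open>h\<^sub>j' = \<Sum>\<^sub>l s\<^sub>l\<^sub>j P\<^sub>l\<^sub>-\<^sub>1\<close>.

  The Caputo derivative of \<open>h\<^sub>j\<close> is the fractional integral of order \<open>\<rho> = 1 - \<mu>\<close> of \<open>h\<^sub>j'\<close>,
  and for a Legendre polynomial it is explicit:
  \<open>I\<^sup>\<rho> P\<^sub>k (x) = k!/\<Gamma>(k + 1 + \<rho>) (1 + x)\<^sup>\<rho> P\<^sub>k\<^sup>(\<^sup>-\<^sup>\<rho>\<^sup>,\<^sup>\<rho>\<^sup>)(x)\<close>, which follows by expanding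
  both sides in powers of \<open>(1 + x)/2\<close> and evaluating Beta integrals. At \<open>x\<^sub>0 = -1\<close> both sides
  tend to 0.

  For \<open>\<alpha> = \<beta> = 0\<close> we have \<open>s\<^sub>l\<^sub>j = (2l - 1)/2 \<integral> h\<^sub>j' P\<^sub>l\<^sub>-\<^sub>1\<close>; integrating by parts and
  applying the quadrature to \<open>h\<^sub>j P\<^sub>l\<^sub>-\<^sub>1'\<close> gives the closed form.
\<close>

section \<open>Jacobi polynomials as hypergeometric sums\<close>

lemma pochhammer_mult_Gamma:
  assumes "(z::real) > 0"
  shows "pochhammer z n * Gamma z = Gamma (z + real n)"
proof -
  have "Gamma z \<noteq> 0" using Gamma_real_pos[OF assms] by linarith
  moreover have "z \<notin> \<int>\<^sub>\<le>\<^sub>0" using assms by (auto dest: nonpos_Ints_nonpos)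
  ultimately show ?thesis using pochhammer_Gamma[of z n] by (simp add: field_simps)
qed

definition jacobi_hyp_coeff :: "real \<Rightarrow> real \<Rightarrow> nat \<Rightarrow> nat \<Rightarrow> real" where
  "jacobi_hyp_coeff a b n k = pochhammer (a + 1) n / fact n *
     (pochhammer (- real n) k * pochhammer (real n + a + b + 1) k / (pochhammer (a + 1) k * fact k))"

lemma poly_jacobi_poly:
  assumes "a > -1"
  shows "poly (jacobi_poly a b n) t = (\<Sum>k\<le>n. jacobi_hyp_coeff a b n k * ((1 - t) / 2) ^ k)"
proof (cases "n = 0")
  case True
  then show ?thesis by (simp add: jacobi_poly_def jacobi_hyp_coeff_def)
next
  case False
  have "Gamma (a + 1) \<noteq> 0" using Gamma_real_pos[of "a + 1"] assms by fastforce
  then have "pochhammer (a + 1) n = Gamma (real n + a + 1) / Gamma (a + 1)"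
    using pochhammer_mult_Gamma[of "a + 1" n] assms by (simp add: eq_divide_eq add_ac)
  then have "Gamma (real n + a + 1) / (fact n * Gamma (a + 1)) = pochhammer (a + 1) n / fact n"
    by simp
  with False show ?thesis
    unfolding jacobi_poly_def
    by (simp add: poly_sum jacobi_hyp_coeff_def sum_distrib_left mult_ac diff_divide_distrib)
qed

lemma jacobi_poly_eq_sum:
  assumes "a > -1"
  shows "jacobi_poly a b n = (\<Sum>k\<le>n. smult (jacobi_hyp_coeff a b n k) ([:1/2, -1/2:] ^ k))"
proof -
  have "poly (jacobi_poly a b n) = poly (\<Sum>k\<le>n. smult (jacobi_hyp_coeff a b n k) ([:1/2, -1/2:] ^ k))"
    by (rule ext) (simp add: poly_jacobi_poly[OF assms] poly_sum diff_divide_distrib)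
  then show ?thesis by (simp add: poly_eq_poly_eq_iff)
qed

lemma degree_linear_power': "(d::'a::idom) \<noteq> 0 \<Longrightarrow> degree ([:c, d:] ^ k) = k"
  by (simp add: degree_power_eq)

lemma degree_jacobi_poly_le:
  assumes "a > -1"
  shows "degree (jacobi_poly a b n) \<le> n"
  unfolding jacobi_poly_eq_sum[OF assms]
  by (intro degree_sum_le) (auto intro!: order.trans[OF degree_smult_le] simp: degree_linear_power')

definition jacobi_lead :: "real \<Rightarrow> real \<Rightarrow> nat \<Rightarrow> real" where
  "jacobi_lead a b n = pochhammer (real n + a + b + 1) n / (fact n * 2 ^ n)"

lemma coeff_jacobi_poly_top:
  assumes "a > -1"
  shows "coeff (jacobi_poly a b n) n = jacobi_lead a b n"
proof -
  have "pochhammer (a + 1) n > 0"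
    using assms by (intro pochhammer_pos) simp
  then have top: "jacobi_hyp_coeff a b n n = (-1) ^ n * pochhammer (real n + a + b + 1) n / fact n"
    unfolding jacobi_hyp_coeff_def pochhammer_same by (simp add: field_simps)
  have "coeff (jacobi_poly a b n) n
        = (\<Sum>k\<le>n. jacobi_hyp_coeff a b n k * coeff ([:1/2, -1/2::real:] ^ k) n)"
    unfolding jacobi_poly_eq_sum[OF assms] by (simp add: coeff_sum)
  also have "\<dots> = jacobi_hyp_coeff a b n n * coeff ([:1/2, -1/2::real:] ^ n) n"
    by (subst sum.mono_neutral_right[where S="{n}"]) (auto simp: coeff_eq_0 degree_linear_power')
  also have "coeff ([:1/2, -1/2::real:] ^ n) n = (-1/2) ^ n"
    using lead_coeff_power[of "[:1/2, -1/2::real:]" n] by (simp add: degree_linear_power')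
  also have "jacobi_hyp_coeff a b n n * (-1/2) ^ n
      = pochhammer (real n + a + b + 1) n / fact n * ((-1) * (-1/2)) ^ n"
    unfolding top power_mult_distrib by (simp add: field_simps)
  also have "\<dots> = jacobi_lead a b n"
    by (simp add: jacobi_lead_def power_divide)
  finally show ?thesis .
qed

lemma jacobi_lead_pos:
  assumes "a > -1" "b > -1"
  shows "jacobi_lead a b n > 0"
proof (cases n)
  case (Suc m)
  then have "real n + a + b + 1 > 0" using assms by simp
  then show ?thesis unfolding jacobi_lead_def by (intro divide_pos_pos pochhammer_pos) auto
qed (simp add: jacobi_lead_def)

lemma degree_jacobi_poly:
  assumes "a > -1" "b > -1"
  shows "degree (jacobi_poly a b n) = n"
  using degree_jacobi_poly_le[OF assms(1), of b n] coeff_jacobi_poly_top[OF assms(1), of b n]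
    jacobi_lead_pos[OF assms, of n]
  by (metis le_antisym le_degree less_irrefl)

lemma jacobi_hyp_coeff_Suc:
  assumes "a > -1"
  shows "jacobi_hyp_coeff a b (Suc m) (Suc k) * real (Suc k) * (-1/2)
         = (real (Suc m) + a + b + 1) / 2 * jacobi_hyp_coeff (a + 1) (b + 1) m k"
proof -
  have field: "A * P / (M * F) * (- M * Q * (S * R) / (A * X * (K * G))) * K * (-1/2)
      = S / 2 * (P / F * (Q * R / (X * G)))"
    if "A \<noteq> 0" "M \<noteq> 0" "F \<noteq> 0" "X \<noteq> 0" "K \<noteq> 0" "G \<noteq> 0" for A P M F Q S R X K G :: real
    using that by (simp add: field_simps)
  have e1: "pochhammer (a + 1) (Suc m) = (a + 1) * pochhammer (a + 1 + 1) m"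
    and e2: "pochhammer (a + 1) (Suc k) = (a + 1) * pochhammer (a + 1 + 1) k"
    and e3: "pochhammer (- real (Suc m)) (Suc k) = - real (Suc m) * pochhammer (- real m) k"
    by (simp_all add: pochhammer_rec)
  have e4: "pochhammer (real (Suc m) + a + b + 1) (Suc k)
      = (real (Suc m) + a + b + 1) * pochhammer (real m + (a + 1) + (b + 1) + 1) k"
    by (simp add: pochhammer_rec add_ac)
  have f: "(fact (Suc m)::real) = real (Suc m) * fact m" "(fact (Suc k)::real) = real (Suc k) * fact k"
    by simp_all
  have "a + 1 \<noteq> 0" "pochhammer (a + 1 + 1) k \<noteq> 0" "(fact m::real) \<noteq> 0" "(fact k::real) \<noteq> 0"
    using assms pochhammer_pos[of "a + 1 + 1" k] by auto
  then show ?thesis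
    unfolding jacobi_hyp_coeff_def e1 e2 e3 e4 f by (intro field) auto
qed

lemma pderiv_sum: "pderiv (\<Sum>k\<in>A. f k) = (\<Sum>k\<in>A. pderiv (f k))"
  by (induction A rule: infinite_finite_induct) (auto simp: pderiv_add)

lemma smult_sum_right: "smult c (\<Sum>k\<in>A. f k) = (\<Sum>k\<in>A. smult c (f k))"
  by (induction A rule: infinite_finite_induct) (auto simp: smult_add_right)

lemma pderiv_jacobi_poly:
  assumes "a > -1"
  shows "pderiv (jacobi_poly a b (Suc m))
         = smult ((real (Suc m) + a + b + 1) / 2) (jacobi_poly (a + 1) (b + 1) m)"
proof -
  let ?L = "[:1/2, -1/2::real:]"
  let ?c = "jacobi_hyp_coeff a b (Suc m)"
  have d: "pderiv (smult (?c k) (?L ^ k))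
           = (if k = 0 then 0 else smult (?c k * real k * (-1/2)) (?L ^ (k - 1)))" for k
    by (cases k) (auto simp: pderiv_smult pderiv_power_Suc pderiv_pCons mult_ac simp del: power_Suc)
  have "pderiv (jacobi_poly a b (Suc m)) = (\<Sum>k\<le>Suc m. pderiv (smult (?c k) (?L ^ k)))"
    unfolding jacobi_poly_eq_sum[OF assms] pderiv_sum ..
  also have "\<dots> = (\<Sum>k\<le>m. smult (?c (Suc k) * real (Suc k) * (-1/2)) (?L ^ k))"
    unfolding sum.atMost_Suc_shift d by simp
  also have "\<dots> = (\<Sum>k\<le>m. smult ((real (Suc m) + a + b + 1) / 2)
                                  (smult (jacobi_hyp_coeff (a + 1) (b + 1) m k) (?L ^ k)))"
    by (simp only: jacobi_hyp_coeff_Suc[OF assms] smult_smult)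
  also have "\<dots> = smult ((real (Suc m) + a + b + 1) / 2) (jacobi_poly (a + 1) (b + 1) m)"
    using assms by (simp add: jacobi_poly_eq_sum smult_sum_right)
  finally show ?thesis .
qed

lemma jacobi_hyp_coeff_shift:
  assumes "b > -1"
  shows "jacobi_hyp_coeff b a (m + d) (m + r) * real ((m + r) choose m)
    = jacobi_hyp_coeff b a (m + d) m * (pochhammer (real (m + d) + b + a + 1 + real m) r
        * pochhammer (- real d) r / (fact r * pochhammer (b + 1 + real m) r))"
proof -
  have e1: "pochhammer (- real (m + d)) (m + r) = pochhammer (- real (m + d)) m * pochhammer (- real d) r"
    unfolding pochhammer_product' by simp
  have e2: "pochhammer (real (m + d) + b + a + 1) (m + r)
      = pochhammer (real (m + d) + b + a + 1) m * pochhammer (real (m + d) + b + a + 1 + real m) r"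
    unfolding pochhammer_product' by simp
  have e3: "pochhammer (b + 1) (m + r) = pochhammer (b + 1) m * pochhammer (b + 1 + real m) r"
    unfolding pochhammer_product' by simp
  have e4: "real ((m + r) choose m) = fact (m + r) / (fact m * fact r)"
    by (simp add: binomial_fact)
  have "pochhammer (b + 1) m \<noteq> 0" "pochhammer (b + 1 + real m) r \<noteq> 0"
    using assms pochhammer_pos[of "b + 1" m] pochhammer_pos[of "b + 1 + real m" r] by auto
  then show ?thesis
    unfolding jacobi_hyp_coeff_def e1 e2 e3 e4 by (simp add: field_simps)
qed

lemma jacobi_hyp_coeff_reflect:
  assumes "a > -1" "b > -1" "m \<le> n"
  shows "(-1) ^ (n + m) * (\<Sum>k\<le>n. jacobi_hyp_coeff b a n k * real (k choose m))
         = jacobi_hyp_coeff a b n m"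
proof -
  obtain d where n: "n = m + d" using assms(3) le_Suc_ex by blast
  define A where "A = real n + b + a + 1 + real m"
  define c where "c = b + 1 + real m"
  have c0: "c > 0" using assms by (simp add: c_def)
  have "(\<Sum>k\<le>n. jacobi_hyp_coeff b a n k * real (k choose m))
        = (\<Sum>k\<in>{m..m + d}. jacobi_hyp_coeff b a n k * real (k choose m))"
    by (rule sum.mono_neutral_right) (auto simp: n)
  also have "\<dots> = (\<Sum>r\<in>{0..d}. jacobi_hyp_coeff b a n (m + r) * real ((m + r) choose m))"
    using sum.shift_bounds_cl_nat_ivl[of "\<lambda>k. jacobi_hyp_coeff b a n k * real (k choose m)" 0 m d]
    by (simp add: add_ac)
  also have "\<dots> = jacobi_hyp_coeff b a n m *
      (\<Sum>r\<in>{0..d}. pochhammer A r * pochhammer (- real d) r / (fact r * pochhammer c r))"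
    unfolding n jacobi_hyp_coeff_shift[OF assms(2)] A_def c_def by (simp add: sum_distrib_left)
  also have "(\<Sum>r\<in>{0..d}. pochhammer A r * pochhammer (- real d) r / (fact r * pochhammer c r))
      = pochhammer (c - A) d / pochhammer c d"
    using Vandermonde_pochhammer[of d c A] c0 by (simp add: of_nat_fact)
  also have "c - A = - (real d + a + real m)" by (simp add: A_def c_def n)
  also have "pochhammer (- (real d + a + real m)) d = (-1) ^ d * pochhammer (a + 1 + real m) d"
    unfolding pochhammer_minus by (simp add: algebra_simps)
  finally have S: "(\<Sum>k\<le>n. jacobi_hyp_coeff b a n k * real (k choose m))
      = jacobi_hyp_coeff b a n m * ((-1) ^ d * pochhammer (a + 1 + real m) d / pochhammer c d)" .
  have e3: "pochhammer (b + 1) n = pochhammer (b + 1) m * pochhammer c d"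
    unfolding n pochhammer_product' c_def by simp
  have e4: "pochhammer (a + 1) n = pochhammer (a + 1) m * pochhammer (a + 1 + real m) d"
    unfolding n pochhammer_product' by simp
  have nz: "pochhammer (b + 1) m \<noteq> 0" "pochhammer c d \<noteq> 0" "pochhammer (a + 1) m \<noteq> 0"
    using assms c0 pochhammer_pos[of "b + 1" m] pochhammer_pos[of c d] pochhammer_pos[of "a + 1" m]
    by auto
  have sign: "(-1::real) ^ (n + m) * (-1) ^ d = 1"
  proof -
    have "(-1::real) ^ (n + m) * (-1) ^ d = (-1) ^ (2 * (m + d))"
      by (simp add: n algebra_simps flip: power_add)
    then show ?thesis by (simp add: power_mult)
  qed
  show ?thesis
    unfolding S unfolding jacobi_hyp_coeff_def e3 e4 using nz sign by (simp add: field_simps add_ac)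
qed

lemma poly_jacobi_poly_reflect:
  assumes "a > -1" "b > -1"
  shows "poly (jacobi_poly a b n) t
         = (-1) ^ n * (\<Sum>k\<le>n. jacobi_hyp_coeff b a n k * ((1 + t) / 2) ^ k)"
proof -
  define z where "z = (1 - t) / 2"
  have half: "(1 + t) / 2 = -z + 1" by (simp add: z_def field_simps)
  have binomial: "((1 + t) / 2) ^ k = (\<Sum>m\<le>n. real (k choose m) * (-1) ^ m * z ^ m)" if "k \<le> n" for k
  proof -
    have "((1 + t) / 2) ^ k = (-z + 1) ^ k" by (simp only: half)
    also have "\<dots> = (\<Sum>m\<le>k. real (k choose m) * (-z) ^ m)"
      unfolding binomial_ring by simp
    also have "\<dots> = (\<Sum>m\<le>n. real (k choose m) * (-z) ^ m)"
      using that by (intro sum.mono_neutral_left) auto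
    also have "\<dots> = (\<Sum>m\<le>n. real (k choose m) * (-1) ^ m * z ^ m)"
      by (simp add: power_minus[of z] mult.assoc)
    finally show ?thesis .
  qed
  let ?c = "jacobi_hyp_coeff b a n"
  have termwise: "?c k * ((1 + t) / 2) ^ k = (\<Sum>m\<le>n. ?c k * (real (k choose m) * (-1) ^ m * z ^ m))"
    if "k \<le> n" for k
    unfolding binomial[OF that] by (simp add: sum_distrib_left)
  have "(-1) ^ n * (\<Sum>k\<le>n. ?c k * ((1 + t) / 2) ^ k)
        = (-1) ^ n * (\<Sum>k\<le>n. \<Sum>m\<le>n. ?c k * (real (k choose m) * (-1) ^ m * z ^ m))"
    by (intro arg_cong[where f="\<lambda>s. (-1) ^ n * s"] sum.cong refl) (rule termwise, simp)
  also have "\<dots> = (\<Sum>m\<le>n. \<Sum>k\<le>n. (-1) ^ n * (?c k * (real (k choose m) * (-1) ^ m * z ^ m)))"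
    by (subst sum.swap) (simp add: sum_distrib_left)
  also have "\<dots> = (\<Sum>m\<le>n. ((-1) ^ (n + m) * (\<Sum>k\<le>n. ?c k * real (k choose m))) * z ^ m)"
    by (simp add: sum_distrib_left sum_distrib_right power_add mult_ac)
  also have "\<dots> = (\<Sum>m\<le>n. jacobi_hyp_coeff a b n m * z ^ m)"
    by (intro sum.cong) (simp_all add: jacobi_hyp_coeff_reflect[OF assms])
  finally show ?thesis unfolding poly_jacobi_poly[OF assms(1)] z_def by simp
qed

section \<open>Weighted integrals and orthogonality\<close>

lemma power_mult_powr: "(x::real) \<ge> 0 \<Longrightarrow> x^i * x powr a = x powr (a + real i)"
  by (cases "x = 0") (auto simp: powr_add powr_realpow)

lemma has_integral_jacobi_weight_monomial:
  assumes "a > -1" "b > -1"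
  shows "((\<lambda>t. ((1-t)/2)^i * ((1+t)/2)^j * (1-t) powr a * (1+t) powr b) has_integral
          (2 powr (a+b+1) * Beta (a + real i + 1) (b + real j + 1))) {-1..1}"
proof -
  have "((\<lambda>s. s powr (b + real j + 1 - 1) * (1-s) powr (a + real i + 1 - 1)) has_integral
          Beta (b + real j + 1) (a + real i + 1)) {0..1}"
    using assms by (intro has_integral_Beta_real) auto
  then have "((\<lambda>s. 2 powr (a+b) * (s powr (b + real j) * (1-s) powr (a + real i))) has_integral
          2 powr (a+b) * Beta (a + real i + 1) (b + real j + 1)) {0..1}"
    by (intro has_integral_mult_right) (simp add: Beta_commute)
  from has_integral_affinity'[OF this[unfolded cbox_interval[symmetric]], of "1/2" "1/2"]
  have "((\<lambda>t. 2 powr (a+b) * (((1/2) * t + 1/2) powr (b + real j) * (1 - ((1/2) * t + 1/2)) powr (a + real i)))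
     has_integral (2 powr (a+b) * Beta (a + real i + 1) (b + real j + 1)) * 2) {-1..1}"
    by (simp add: cbox_interval mult.commute)
  moreover have "2 powr (a+b) * (((1/2) * t + 1/2) powr (b + real j) * (1 - ((1/2) * t + 1/2)) powr (a + real i)) =
      ((1-t)/2)^i * ((1+t)/2)^j * (1-t) powr a * (1+t) powr b" if "t \<in> {-1..1}" for t
  proof -
    have s1: "(1/2) * t + 1/2 = (1+t)/2" "1 - ((1/2) * t + 1/2) = (1-t)/2" by auto
    have nn: "(1+t)/2 \<ge> 0" "(1-t)/2 \<ge> 0" using that by auto
    have "(1-t) powr a = (2 * ((1-t)/2)) powr a" by (rule arg_cong[where f="\<lambda>x. x powr a"]) simp
    also have "\<dots> = 2 powr a * ((1-t)/2) powr a" by (rule powr_mult)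
    finally have "(1-t) powr a = 2 powr a * ((1-t)/2) powr a" .
    moreover have "(1+t) powr b = (2 * ((1+t)/2)) powr b" by (rule arg_cong[where f="\<lambda>x. x powr b"]) simp
    moreover have "\<dots> = 2 powr b * ((1+t)/2) powr b" by (rule powr_mult)
    ultimately have "((1-t)/2)^i * ((1+t)/2)^j * (1-t) powr a * (1+t) powr b =
      2 powr (a+b) * ((((1+t)/2)^j * ((1+t)/2) powr b) * (((1-t)/2)^i * ((1-t)/2) powr a))"
      by (simp add: powr_add mult_ac)
    also have "\<dots> = 2 powr (a+b) * (((1+t)/2) powr (b + real j) * ((1-t)/2) powr (a + real i))"
      using nn by (simp add: power_mult_powr)
    finally show ?thesis unfolding s1(2) unfolding s1(1) by simp
  qed
  ultimately show ?thesis
    by (subst has_integral_cong[symmetric]) (auto simp: powr_add mult_ac)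
qed

lemma has_integral_jacobi_weight_sum:
  assumes "a > -1" "b > -1"
  shows "((\<lambda>t. (\<Sum>k\<in>A. c k * ((1-t)/2)^k) * ((1+t)/2)^j * (1-t) powr a * (1+t) powr b) has_integral
          (\<Sum>k\<in>A. c k * (2 powr (a+b+1) * Beta (a + real k + 1) (b + real j + 1)))) {-1..1}"
proof (cases "finite A")
  case True
  have "((\<lambda>t. \<Sum>k\<in>A. c k * (((1-t)/2)^k * ((1+t)/2)^j * (1-t) powr a * (1+t) powr b)) has_integral
          (\<Sum>k\<in>A. c k * (2 powr (a+b+1) * Beta (a + real k + 1) (b + real j + 1)))) {-1..1}"
    by (intro has_integral_sum[OF True] has_integral_mult_right has_integral_jacobi_weight_monomial assms)
  then show ?thesis by (simp add: sum_distrib_right sum_distrib_left mult_ac)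
qed simp

lemma poly_expansion_at_1: "poly (p::real poly) t = (\<Sum>k\<le>degree p. coeff (pcompose p [:1,-2:]) k * ((1-t)/2)^k)"
proof -
  have e: "poly [:1,-2:] ((1-t)/2) = t" by (simp add: field_simps)
  have "poly p t = poly (pcompose p [:1,-2:]) ((1-t)/2)" by (simp only: poly_pcompose e)
  also have "\<dots> = (\<Sum>k\<le>degree (pcompose p [:1,-2:]). coeff (pcompose p [:1,-2:]) k * ((1-t)/2)^k)"
    by (rule poly_altdef)
  also have "degree (pcompose p [:1,-2:]) = degree p" by (simp add: degree_pcompose)
  finally show ?thesis .
qed

lemma poly_expansion_at_neg1: "poly (p::real poly) t = (\<Sum>k\<le>degree p. coeff (pcompose p [:-1,2:]) k * ((1+t)/2)^k)"
proof -
  have e: "poly [:-1,2:] ((1+t)/2) = t" by (simp add: field_simps)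
  have "poly p t = poly (pcompose p [:-1,2:]) ((1+t)/2)" by (simp only: poly_pcompose e)
  also have "\<dots> = (\<Sum>k\<le>degree (pcompose p [:-1,2:]). coeff (pcompose p [:-1,2:]) k * ((1+t)/2)^k)"
    by (rule poly_altdef)
  also have "degree (pcompose p [:-1,2:]) = degree p" by (simp add: degree_pcompose)
  finally show ?thesis .
qed

lemma jacobi_weight_poly_integrable:
  fixes p :: "real poly" and a b :: real
  assumes "a > -1" "b > -1"
  shows "(\<lambda>t. poly p t * (1-t) powr a * (1+t) powr b) integrable_on {-1..1}"
  using has_integral_jacobi_weight_sum[OF assms, where c="\<lambda>k. coeff (pcompose p [:1,-2:]) k" and A="{..degree p}" and j=0]
  unfolding poly_expansion_at_1[of p] by (auto simp: integrable_on_def)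

definition jacobi_integral :: "real \<Rightarrow> real \<Rightarrow> (real \<Rightarrow> real) \<Rightarrow> real" where
  "jacobi_integral a b f = integral {-1..1} (\<lambda>t. f t * (1-t) powr a * (1+t) powr b)"

lemma jacobi_integral_add:
  assumes "(\<lambda>t. f t * (1-t) powr a * (1+t) powr b) integrable_on {-1..1}"
      "(\<lambda>t. g t * (1-t) powr a * (1+t) powr b) integrable_on {-1..1}"
  shows "jacobi_integral a b (\<lambda>t. f t + g t) = jacobi_integral a b f + jacobi_integral a b g"
  unfolding jacobi_integral_def using integral_add[OF assms] by (simp add: distrib_right)

lemma jacobi_integral_cmult: "jacobi_integral a b (\<lambda>t. c * f t) = c * jacobi_integral a b f"
  unfolding jacobi_integral_def by (simp add: mult.assoc)

lemma jacobi_integral_sum: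
  assumes "\<And>k. k \<in> A \<Longrightarrow> (\<lambda>t. f k t * (1-t) powr a * (1+t) powr b) integrable_on {-1..1}"
  shows "jacobi_integral a b (\<lambda>t. \<Sum>k\<in>A. f k t) = (\<Sum>k\<in>A. jacobi_integral a b (f k))"
proof (cases "finite A")
  case True
  then show ?thesis unfolding jacobi_integral_def using assms
    by (subst integral_sum[symmetric]) (auto simp: sum_distrib_right)
qed (simp add: jacobi_integral_def)

definition jacobi_top_moment :: "real \<Rightarrow> real \<Rightarrow> nat \<Rightarrow> real" where
  "jacobi_top_moment a b n = 2 powr (a+b+1) * Gamma (a + real n + 1) * Gamma (b + real n + 1) / Gamma (a + b + 2 * real n + 2)"

lemma jacobi_beta_sum:
  assumes "a > -1" "b > -1"
  shows "(\<Sum>k\<le>n. jacobi_hyp_coeff a b n k * Beta (a + real k + 1) (b + real j + 1)) =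
    pochhammer (a+1) n / fact n * Gamma (a+1) * Gamma (b + real j + 1) / Gamma (a + b + real j + 2) *
    (pochhammer (real j + 1 - real n) n / pochhammer (a + b + real j + 2) n)"
proof -
  define c where "c = a + b + real j + 2"
  define A where "A = real n + a + b + 1"
  have c0: "c > 0" using assms by (simp add: c_def)
  have g1: "Gamma (a + real k + 1) = Gamma (a+1) * pochhammer (a+1) k" for k
    using pochhammer_mult_Gamma[of "a+1" k] assms by (simp add: add_ac mult.commute)
  have g2: "Gamma (a + real k + 1 + (b + real j + 1)) = Gamma c * pochhammer c k" for k
    using pochhammer_mult_Gamma[OF c0, of k] by (simp add: c_def add_ac mult.commute)
  have pa: "pochhammer (a+1) k \<noteq> 0" "pochhammer c k \<noteq> 0" for k
    using pochhammer_pos[of "a+1" k] pochhammer_pos[of c k] assms c0 by auto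
  have gc: "Gamma c \<noteq> 0" using Gamma_real_pos[OF c0] by simp
  have "(\<Sum>k\<le>n. jacobi_hyp_coeff a b n k * Beta (a + real k + 1) (b + real j + 1)) =
     (\<Sum>k\<le>n. (pochhammer (a+1) n / fact n * Gamma (a+1) * Gamma (b + real j + 1) / Gamma c) *
        (pochhammer A k * pochhammer (- real n) k / (fact k * pochhammer c k)))"
    unfolding Beta_def g1 g2 jacobi_hyp_coeff_def A_def
    by (rule sum.cong[OF refl]) (use pa gc in \<open>simp add: field_simps\<close>)
  also have "\<dots> = (pochhammer (a+1) n / fact n * Gamma (a+1) * Gamma (b + real j + 1) / Gamma c) *
        (\<Sum>k\<in>{0..n}. pochhammer A k * pochhammer (- real n) k / (fact k * pochhammer c k))"
    by (simp add: sum_distrib_left atLeast0AtMost)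
  also have "(\<Sum>k\<in>{0..n}. pochhammer A k * pochhammer (- real n) k / (fact k * pochhammer c k)) =
       pochhammer (c - A) n / pochhammer c n"
    using Vandermonde_pochhammer[of n c A] c0 by (simp add: of_nat_fact)
  also have "c - A = real j + 1 - real n" by (simp add: c_def A_def)
  finally show ?thesis by (simp add: c_def)
qed

lemma jacobi_integral_jacobi_poly_power:
  assumes "a > -1" "b > -1"
  shows "jacobi_integral a b (\<lambda>t. poly (jacobi_poly a b n) t * ((1+t)/2)^j) =
     2 powr (a+b+1) * (\<Sum>k\<le>n. jacobi_hyp_coeff a b n k * Beta (a + real k + 1) (b + real j + 1))"
proof -
  have "jacobi_integral a b (\<lambda>t. poly (jacobi_poly a b n) t * ((1+t)/2)^j) =
     (\<Sum>k\<le>n. jacobi_hyp_coeff a b n k * (2 powr (a+b+1) * Beta (a + real k + 1) (b + real j + 1)))"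
    unfolding jacobi_integral_def poly_jacobi_poly[OF assms(1)]
    by (rule integral_unique[OF has_integral_jacobi_weight_sum[OF assms]])
  then show ?thesis by (simp add: sum_distrib_left mult_ac)
qed

lemma jacobi_integral_jacobi_poly_power_low:
  assumes "a > -1" "b > -1" "j < n"
  shows "jacobi_integral a b (\<lambda>t. poly (jacobi_poly a b n) t * ((1+t)/2)^j) = 0"
proof -
  have "pochhammer (real j + 1 - real n) n = 0"
    unfolding pochhammer_eq_0_iff using assms(3)
    by (intro exI[of _ "n - 1 - j"]) (auto simp: of_nat_diff)
  then show ?thesis unfolding jacobi_integral_jacobi_poly_power[OF assms(1,2)] jacobi_beta_sum[OF assms(1,2)] by simp
qed

lemma jacobi_integral_jacobi_poly_power_top:
  assumes "a > -1" "b > -1"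
  shows "jacobi_integral a b (\<lambda>t. poly (jacobi_poly a b n) t * ((1+t)/2)^n) = jacobi_top_moment a b n"
proof -
  define c where "c = a + b + real n + 2"
  have c0: "c > 0" using assms by (simp add: c_def)
  have ga: "Gamma (a+1) > 0" using assms by simp
  have gc: "Gamma c > 0" using c0 by simp
  have p1: "pochhammer (a+1) n * Gamma (a+1) = Gamma (a + real n + 1)"
    using pochhammer_mult_Gamma[of "a+1" n] assms by (simp add: add_ac)
  have p2: "pochhammer c n * Gamma c = Gamma (a + b + 2 * real n + 2)"
    using pochhammer_mult_Gamma[OF c0, of n] by (simp add: add_ac c_def)
  have p3: "pochhammer (real n + 1 - real n) n = fact n" by (simp add: pochhammer_fact)
  have nz: "pochhammer c n \<noteq> 0" using pochhammer_pos[OF c0, of n] by simp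
  have cn: "a + b + real n + 2 = c" by (simp add: c_def)
  have gc': "Gamma c \<noteq> 0" using gc by linarith
  show ?thesis unfolding jacobi_integral_jacobi_poly_power[OF assms] jacobi_beta_sum[OF assms] jacobi_top_moment_def p3 cn
    unfolding p1[symmetric] p2[symmetric] using nz gc' by (simp add: field_simps)
qed

lemma coeff_pcompose_affine:
  fixes p :: "real poly"
  assumes "degree p \<le> n"
  shows "coeff (pcompose p [:-1,2:]) n = coeff p n * 2^n"
proof (cases "degree p = n")
  case True
  then show ?thesis using lead_coeff_comp[of "[:-1,2::real:]" p] degree_pcompose[of p "[:-1,2::real:]"]
    by simp
next
  case False
  then have "degree p < n" using assms by simp
  then show ?thesis using degree_pcompose[of p "[:-1,2::real:]"] by (simp add: coeff_eq_0)
qed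

lemma jacobi_integral_jacobi_poly_mult:
  fixes p :: "real poly"
  assumes "a > -1" "b > -1" "degree p \<le> n"
  shows "jacobi_integral a b (\<lambda>t. poly (jacobi_poly a b n) t * poly p t) = coeff p n * 2^n * jacobi_top_moment a b n"
proof -
  define d where "d = coeff (pcompose p [:-1,2:])"
  have pe: "poly p t = (\<Sum>k\<le>n. d k * ((1+t)/2)^k)" for t
  proof -
    have "poly p t = (\<Sum>k\<le>degree p. d k * ((1+t)/2)^k)" unfolding d_def by (rule poly_expansion_at_neg1)
    also have "\<dots> = (\<Sum>k\<le>n. d k * ((1+t)/2)^k)"
      using assms(3) degree_pcompose[of p "[:-1,2::real:]"]
      by (intro sum.mono_neutral_left) (auto simp: d_def coeff_eq_0)
    finally show ?thesis .
  qed
  have int: "(\<lambda>t. d k * (poly (jacobi_poly a b n) t * ((1+t)/2)^k) * (1-t) powr a * (1+t) powr b) integrable_on {-1..1}" for k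
    using jacobi_weight_poly_integrable[OF assms(1,2), of "smult (d k) (jacobi_poly a b n * [:1/2,1/2:]^k)"]
    by (simp add: poly_power mult_ac add_divide_distrib)
  have "jacobi_integral a b (\<lambda>t. poly (jacobi_poly a b n) t * poly p t) =
        jacobi_integral a b (\<lambda>t. \<Sum>k\<le>n. d k * (poly (jacobi_poly a b n) t * ((1+t)/2)^k))"
    unfolding pe by (simp add: sum_distrib_left mult_ac)
  also have "\<dots> = (\<Sum>k\<le>n. d k * jacobi_integral a b (\<lambda>t. poly (jacobi_poly a b n) t * ((1+t)/2)^k))"
    by (subst jacobi_integral_sum[OF int]) (auto simp: jacobi_integral_cmult)
  also have "\<dots> = (\<Sum>k\<in>{n}. d k * jacobi_integral a b (\<lambda>t. poly (jacobi_poly a b n) t * ((1+t)/2)^k))"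
    by (intro sum.mono_neutral_right) (auto simp: jacobi_integral_jacobi_poly_power_low[OF assms(1,2)])
  also have "\<dots> = coeff p n * 2^n * jacobi_top_moment a b n"
    using jacobi_integral_jacobi_poly_power_top[OF assms(1,2)] coeff_pcompose_affine[OF assms(3)] by (simp add: d_def)
  finally show ?thesis .
qed

lemma jacobi_gamma_eq:
  assumes "a > -1" "b > -1" "real n + a + b + 1 > 0"
  shows "jacobi_lead a b n * 2^n * jacobi_top_moment a b n = jacobi_gamma a b n"
proof -
  define z where "z = real n + a + b + 1"
  have z0: "z > 0" using assms by (simp add: z_def)
  have p: "pochhammer z n * Gamma z = Gamma (z + real n)" by (rule pochhammer_mult_Gamma[OF z0])
  have g1: "Gamma (a + b + 2 * real n + 2) = (z + real n) * Gamma (z + real n)"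
  proof -
    have "z + real n \<notin> \<int>\<^sub>\<le>\<^sub>0" using z0 by (auto dest: nonpos_Ints_nonpos)
    from Gamma_plus1[OF this] show ?thesis by (simp add: z_def add_ac)
  qed
  have nz: "pochhammer z n \<noteq> 0" "(fact n::real) \<noteq> 0"
    using pochhammer_pos[OF z0, of n] by auto
  have "jacobi_lead a b n * 2^n * jacobi_top_moment a b n
      = pochhammer z n / fact n * (2 powr (a + b + 1) * Gamma (real n + a + 1) * Gamma (real n + b + 1)
          / ((z + real n) * (pochhammer z n * Gamma z)))"
    unfolding jacobi_lead_def jacobi_top_moment_def g1 p by (simp add: z_def add_ac)
  also have "\<dots> = 2 powr (a + b + 1) * Gamma (real n + a + 1) * Gamma (real n + b + 1)
      / ((z + real n) * fact n * Gamma z)"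
  proof -
    have cancel: "P / F * (X / (Z * (P * G))) = X / (Z * F * G)" if "P \<noteq> 0" for P F X Z G :: real
      using that by (cases "F = 0"; cases "Z = 0"; cases "G = 0") (simp_all add: field_simps)
    show ?thesis by (rule cancel[OF nz(1)])
  qed
  also have "\<dots> = jacobi_gamma a b n"
    unfolding jacobi_gamma_def z_def by (simp add: add_ac)
  finally show ?thesis .
qed

lemma jacobi_top_moment_shift:
  assumes "N \<ge> 1"
  shows "jacobi_top_moment (a+1) (b+1) (N-1) = 4 * jacobi_top_moment a b N"
proof -
  have r: "real (N-1) = real N - 1" using assms by (simp add: of_nat_diff)
  have p2: "(2::real) powr (x + 2) = 4 * 2 powr x" for x by (simp add: powr_add)
  have "(2::real) powr (a + 1 + (b + 1) + 1) = 4 * 2 powr (a+b+1)"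
    using p2[of "a+b+1"] by (simp add: add_ac)
  then show ?thesis unfolding jacobi_top_moment_def r by (simp add: add_ac algebra_simps)
qed

lemma jacobi_poly_orthogonal:
  fixes p :: "real poly"
  assumes "a > -1" "b > -1" "degree p < n"
  shows "jacobi_integral a b (\<lambda>t. poly (jacobi_poly a b n) t * poly p t) = 0"
  using jacobi_integral_jacobi_poly_mult[OF assms(1,2), of p n] assms(3) by (simp add: coeff_eq_0)

lemma jacobi_poly_norm:
  assumes "a > -1" "b > -1" "real n + a + b + 1 > 0"
  shows "jacobi_integral a b (\<lambda>t. poly (jacobi_poly a b n) t * poly (jacobi_poly a b n) t)
         = jacobi_gamma a b n"
  using jacobi_integral_jacobi_poly_mult[OF assms(1,2) degree_jacobi_poly_le[OF assms(1)]]
    coeff_jacobi_poly_top[OF assms(1)] jacobi_gamma_eq[OF assms] by simp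

lemma jacobi_integral_poly_add:
  fixes p q :: "real poly"
  assumes "a > -1" "b > -1"
  shows "jacobi_integral a b (poly (p + q)) = jacobi_integral a b (poly p) + jacobi_integral a b (poly q)"
  using jacobi_integral_add[OF jacobi_weight_poly_integrable[OF assms, of p] jacobi_weight_poly_integrable[OF assms, of q]]
  by (simp add: poly_add[abs_def])

lemma jacobi_poly_orthogonality:
  assumes "a > -1" "b > -1" "real m + a + b + 1 > 0"
  shows "jacobi_integral a b (\<lambda>t. poly (jacobi_poly a b n) t * poly (jacobi_poly a b m) t)
         = (if n = m then jacobi_gamma a b m else 0)"
proof -
  consider "n = m" | "n < m" | "m < n" by linarith
  then show ?thesis
  proof cases
    case 1
    then show ?thesis using jacobi_poly_norm[OF assms] by simp
  next
    case 2
    then show ?thesis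
      using jacobi_poly_orthogonal[OF assms(1,2), of "jacobi_poly a b n" m] degree_jacobi_poly[OF assms(1,2)]
      by (simp add: mult.commute)
  next
    case 3
    then show ?thesis
      using jacobi_poly_orthogonal[OF assms(1,2), of "jacobi_poly a b m" n] degree_jacobi_poly[OF assms(1,2)]
      by simp
  qed
qed

lemma jacobi_weight_shift:
  assumes "t \<in> {-1..1::real}"
  shows "f t * (1 - t^2) * (1-t) powr a * (1+t) powr b = f t * (1-t) powr (a+1) * (1+t) powr (b+1)"
proof -
  have "(1-t) * (1-t) powr a = (1-t) powr (a+1)" using power_mult_powr[of "1-t" 1 a] assms by simp
  moreover have "(1+t) * (1+t) powr b = (1+t) powr (b+1)" using power_mult_powr[of "1+t" 1 b] assms by simp
  moreover have "1 - t^2 = (1-t)*(1+t)" by (simp add: power2_eq_square algebra_simps)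
  ultimately show ?thesis by (metis (no_types, lifting) mult.assoc mult.left_commute)
qed

lemma jacobi_integral_shift: "jacobi_integral a b (\<lambda>t. f t * (1 - t^2)) = jacobi_integral (a+1) (b+1) f"
  unfolding jacobi_integral_def by (rule integral_cong) (use jacobi_weight_shift in auto)

lemma jacobi_top_moment_pos: "a > -1 \<Longrightarrow> b > -1 \<Longrightarrow> jacobi_top_moment a b n > 0"
  unfolding jacobi_top_moment_def by (intro divide_pos_pos mult_pos_pos) auto

lemma jacobi_gamma_pos:
  assumes "a > -1" "b > -1" "real n + a + b + 1 > 0"
  shows "jacobi_gamma a b n > 0"
  using jacobi_gamma_eq[OF assms, symmetric] jacobi_lead_pos[OF assms(1,2), of n]
    jacobi_top_moment_pos[OF assms(1,2), of n] by simp

section \<open>Jacobi--Gauss--Lobatto quadrature\<close>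

lemma degree_le_pred:
  fixes p :: "'a::zero poly"
  assumes "degree p \<le> Suc n" "coeff p (Suc n) = 0"
  shows "degree p \<le> n"
proof (rule degree_le, intro allI impI)
  fix i assume "i > n"
  then consider "i = Suc n" | "i > Suc n" by linarith
  then show "coeff p i = 0" using assms by cases (auto simp: coeff_eq_0)
qed

lemma is_JGL_quadrature:
  assumes "is_JGL a b N x w" "degree \<phi> \<le> 2 * N - 1"
  shows "jacobi_integral a b (poly \<phi>) = (\<Sum>j\<le>N. poly \<phi> (x j) * w j)"
  using assms unfolding is_JGL_def jacobi_integral_def by blast

lemma degree_square_lobatto_correction:
  fixes Q :: "real poly"
  assumes dQ: "degree Q = Suc m"
  shows "degree (Q * Q + smult (lead_coeff Q / real (Suc m)) (monom 1 m * ([:1, 0, -1:] * pderiv Q)))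
         \<le> 2 * m + 1"
proof -
  define c where "c = lead_coeff Q"
  define \<psi> where "\<psi> = [:1, 0, -1:] * pderiv Q"
  have dQ': "degree (pderiv Q) = m" using dQ by (simp add: degree_pderiv)
  have d\<psi>: "degree \<psi> \<le> m + 2" unfolding \<psi>_def
    using degree_mult_le[of "[:1, 0, -1::real:]" "pderiv Q"] dQ' by simp
  have c\<psi>: "coeff \<psi> (m + 2) = - (real (Suc m) * c)"
  proof -
    have "coeff \<psi> (degree [:1, 0, -1::real:] + degree (pderiv Q)) = - coeff (pderiv Q) m"
      unfolding \<psi>_def coeff_mult_degree_sum using dQ' by simp
    then show ?thesis using dQ dQ' by (simp add: coeff_pderiv c_def)
  qed
  have "degree (Q * Q) \<le> 2 * m + 2" using degree_mult_le[of Q Q] dQ by simp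
  moreover have "degree (monom 1 m * \<psi>) \<le> 2 * m + 2"
    using degree_mult_le[of "monom (1::real) m" \<psi>] degree_monom_le[of "1::real" m] d\<psi> by simp
  ultimately have deg: "degree (Q * Q + smult (c / real (Suc m)) (monom 1 m * \<psi>)) \<le> Suc (2 * m + 1)"
    by (intro degree_add_le) (auto intro: order.trans[OF degree_smult_le])
  have "Suc (2 * m + 1) = degree Q + degree Q" using dQ by simp
  then have c1: "coeff (Q * Q) (Suc (2 * m + 1)) = c * c"
    unfolding c_def by (simp only: coeff_mult_degree_sum)
  have c2: "coeff (monom 1 m * \<psi>) (Suc (2 * m + 1)) = - (real (Suc m) * c)"
    using c\<psi> by (simp add: coeff_monom_mult)
  have "coeff (Q * Q + smult (c / real (Suc m)) (monom 1 m * \<psi>)) (Suc (2 * m + 1)) = 0"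
    by (simp only: coeff_add coeff_smult c1 c2) simp
  with deg show ?thesis
    unfolding c_def[symmetric] \<psi>_def[symmetric] by (rule degree_le_pred)
qed

lemma jacobi_integral_lobatto_correction:
  assumes ab: "a > -1" "b > -1"
  shows "jacobi_integral a b (poly (monom 1 m * ([:1, 0, -1:] * pderiv (jacobi_poly a b (Suc m)))))
         = (real (Suc m) + a + b + 1) / 2 * (2 ^ m * (4 * jacobi_top_moment a b (Suc m)))"
proof -
  let ?Q = "jacobi_poly a b (Suc m)"
  have "poly (monom 1 m * ([:1, 0, -1:] * pderiv ?Q)) = (\<lambda>t. t ^ m * poly (pderiv ?Q) t * (1 - t\<^sup>2))"
    by (rule ext) (simp add: poly_monom power2_eq_square algebra_simps)
  then have "jacobi_integral a b (poly (monom 1 m * ([:1, 0, -1:] * pderiv ?Q)))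
      = jacobi_integral (a + 1) (b + 1) (\<lambda>t. t ^ m * poly (pderiv ?Q) t)"
    by (simp add: jacobi_integral_shift)
  also have "(\<lambda>t. t ^ m * poly (pderiv ?Q) t) = (\<lambda>t. (real (Suc m) + a + b + 1) / 2
      * (poly (jacobi_poly (a + 1) (b + 1) m) t * poly (monom 1 m) t))"
    unfolding pderiv_jacobi_poly[OF ab(1)] by (simp add: poly_monom mult_ac)
  also have "jacobi_integral (a + 1) (b + 1) \<dots>
      = (real (Suc m) + a + b + 1) / 2 * (2 ^ m * jacobi_top_moment (a + 1) (b + 1) m)"
    unfolding jacobi_integral_cmult using jacobi_integral_jacobi_poly_mult[of "a + 1" "b + 1" "monom 1 m" m] ab
    by (simp add: degree_monom_le)
  also have "jacobi_top_moment (a + 1) (b + 1) m = 4 * jacobi_top_moment a b (Suc m)"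
    using jacobi_top_moment_shift[of "Suc m" a b] by simp
  finally show ?thesis .
qed

text \<open>The quadrature is not exact for \<open>P\<^sub>N\<^sup>2\<close>, but it is exact for the corrected square of
  degree \<open>2N - 1\<close> built above, which agrees with \<open>P\<^sub>N\<^sup>2\<close> at the nodes.\<close>

lemma JGL_discrete_norm_top:
  assumes ab: "a > -1" "b > -1" and N1: "N \<ge> 1" and J: "is_JGL a b N x w"
  shows "(\<Sum>j\<le>N. w j * poly (jacobi_poly a b N) (x j) * poly (jacobi_poly a b N) (x j))
         = jacobi_gamma_tilde a b N N"
proof -
  obtain m where Nm: "N = Suc m" using N1 by (cases N) auto
  have pos: "real N + a + b + 1 > 0" using ab N1 by simp
  define Q where "Q = jacobi_poly a b N"
  define lQ where "lQ = jacobi_lead a b N"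
  define \<psi> where "\<psi> = [:1, 0, -1:] * pderiv Q"
  define \<phi> where "\<phi> = Q * Q + smult (lQ / real N) (monom 1 m * \<psi>)"
  have dQ: "degree Q = Suc m" unfolding Q_def Nm by (rule degree_jacobi_poly[OF ab])
  have lead: "lead_coeff Q = lQ"
    unfolding Q_def lQ_def degree_jacobi_poly[OF ab] by (rule coeff_jacobi_poly_top[OF ab(1)])
  have d\<phi>: "degree \<phi> \<le> 2 * N - 1"
    using degree_square_lobatto_correction[OF dQ] unfolding lead \<phi>_def \<psi>_def Nm by simp
  have nodes: "poly \<phi> (x j) = poly Q (x j) * poly Q (x j)" if "j \<le> N" for j
  proof -
    have "x j \<in> x ` {0..N}" using that by auto
    then have "(1 - (x j)\<^sup>2) * poly (pderiv Q) (x j) = 0" using J unfolding is_JGL_def Q_def by auto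
    then have "poly \<psi> (x j) = 0" unfolding \<psi>_def by (simp add: power2_eq_square algebra_simps)
    then show ?thesis unfolding \<phi>_def by simp
  qed
  have "(\<Sum>j\<le>N. w j * poly Q (x j) * poly Q (x j)) = (\<Sum>j\<le>N. poly \<phi> (x j) * w j)"
    by (rule sum.cong) (simp_all add: nodes mult_ac)
  also have "\<dots> = jacobi_integral a b (poly \<phi>)" by (rule is_JGL_quadrature[OF J d\<phi>, symmetric])
  also have "\<dots> = jacobi_integral a b (poly (Q * Q)) + lQ / real N * jacobi_integral a b (poly (monom 1 m * \<psi>))"
    unfolding \<phi>_def jacobi_integral_poly_add[OF ab]
    by (simp add: jacobi_integral_cmult[symmetric] poly_smult[abs_def])
  also have "jacobi_integral a b (poly (Q * Q)) = jacobi_lead a b N * 2 ^ N * jacobi_top_moment a b N"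
    using jacobi_poly_norm[OF ab pos] jacobi_gamma_eq[OF ab pos] by (simp add: Q_def poly_mult[abs_def])
  also have "jacobi_integral a b (poly (monom 1 m * \<psi>))
      = (real N + a + b + 1) / 2 * (2 ^ m * (4 * jacobi_top_moment a b N))"
    unfolding \<psi>_def Q_def Nm by (rule jacobi_integral_lobatto_correction[OF ab])
  finally have S: "(\<Sum>j\<le>N. w j * poly Q (x j) * poly Q (x j))
      = jacobi_lead a b N * 2 ^ N * jacobi_top_moment a b N
        + lQ / real N * ((real N + a + b + 1) / 2 * (2 ^ m * (4 * jacobi_top_moment a b N)))" .
  have T: "jacobi_gamma_tilde a b N N
      = (2 + (a + b + 1) / real N) * (jacobi_lead a b N * 2 ^ N * jacobi_top_moment a b N)"
    unfolding jacobi_gamma_tilde_def jacobi_gamma_eq[OF ab pos] by simp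
  show ?thesis unfolding T Q_def[symmetric] S lQ_def using N1 Nm by (simp add: field_simps)
qed

lemma JGL_discrete_orthogonality:
  assumes ab: "a > -1" "b > -1" and N1: "N \<ge> 1" and J: "is_JGL a b N x w"
    and n: "n \<le> N" and m: "1 \<le> m" "m \<le> N"
  shows "(\<Sum>j\<le>N. w j * poly (jacobi_poly a b n) (x j) * poly (jacobi_poly a b m) (x j)) =
     (if n = m then jacobi_gamma_tilde a b N m else 0)"
proof (cases "n = N \<and> m = N")
  case True
  then show ?thesis using JGL_discrete_norm_top[OF ab N1 J] by simp
next
  case False
  then have "n + m \<le> 2 * N - 1" using n m by linarith
  then have deg: "degree (jacobi_poly a b n * jacobi_poly a b m) \<le> 2 * N - 1"
    using degree_mult_le[of "jacobi_poly a b n" "jacobi_poly a b m"] degree_jacobi_poly[OF ab] by simp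
  have "(\<Sum>j\<le>N. w j * poly (jacobi_poly a b n) (x j) * poly (jacobi_poly a b m) (x j)) =
     jacobi_integral a b (\<lambda>t. poly (jacobi_poly a b n) t * poly (jacobi_poly a b m) t)"
    using is_JGL_quadrature[OF J deg] by (simp add: poly_mult[abs_def] mult_ac)
  also have "\<dots> = (if n = m then jacobi_gamma a b m else 0)"
    using ab m by (intro jacobi_poly_orthogonality) auto
  finally show ?thesis using False by (auto simp: jacobi_gamma_tilde_def)
qed

lemma jacobi_weight_continuous:
  assumes "a > 0" "b > 0"
  shows "continuous_on {-1..1} (\<lambda>t::real. (1-t) powr a * (1+t) powr b)"
  using assms by (intro continuous_intros continuous_on_powr') auto

lemma jacobi_poly_root_quotient:
  assumes ab: "a > -1" "b > -1" and r: "poly (jacobi_poly a b M) r = 0"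
  obtains R where "jacobi_poly a b M = [:-r, 1:] * R" and "R \<noteq> 0"
    and "jacobi_integral a b (\<lambda>t. poly (jacobi_poly a b M) t * poly R t) = 0"
proof -
  have "jacobi_poly a b M \<noteq> 0"
    using jacobi_lead_pos[OF ab, of M] coeff_jacobi_poly_top[OF ab(1), of b M] by auto
  moreover have "[:-r, 1:] dvd jacobi_poly a b M" using r by (simp add: poly_eq_0_iff_dvd)
  then obtain R where PR: "jacobi_poly a b M = [:-r, 1:] * R" by (elim dvdE)
  ultimately have R0: "R \<noteq> 0" by auto
  then have "degree (jacobi_poly a b M) = 1 + degree R" unfolding PR by (subst degree_mult_eq) auto
  then have "degree R < M" using degree_jacobi_poly[OF ab, of M] by simp
  with PR R0 show ?thesis by (intro that jacobi_poly_orthogonal[OF ab])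
qed

lemma jacobi_poly_root_bounds:
  assumes ab: "a > 0" "b > 0" and r: "poly (jacobi_poly a b M) r = 0"
  shows "-1 < r \<and> r < 1"
proof (rule ccontr)
  assume outside: "\<not> (-1 < r \<and> r < 1)"
  have ab': "a > -1" "b > -1" using ab by auto
  define P where "P = jacobi_poly a b M"
  obtain R where PR: "P = [:-r, 1:] * R" and R0: "R \<noteq> 0"
    and orth: "jacobi_integral a b (\<lambda>t. poly P t * poly R t) = 0"
    using jacobi_poly_root_quotient[OF ab' r] unfolding P_def by blast
  \<comment> \<open>\<open>P R = (t - r) R\<^sup>2\<close>, and for \<open>r\<close> outside \<open>(-1, 1)\<close> the factor \<open>t - r\<close> has
    constant sign on \<open>[-1, 1]\<close>\<close>
  define \<sigma> where "\<sigma> = (if r \<le> -1 then 1 else -1::real)"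
  define f where "f t = \<sigma> * (poly P t * poly R t * (1 - t) powr a * (1 + t) powr b)" for t
  have fe: "f t = \<sigma> * (t - r) * (poly R t)\<^sup>2 * ((1 - t) powr a * (1 + t) powr b)" for t
    unfolding f_def PR by (simp add: power2_eq_square algebra_simps)
  have "(\<lambda>t. poly P t * poly R t * (1 - t) powr a * (1 + t) powr b) integrable_on {-1..1}"
    using jacobi_weight_poly_integrable[OF ab', of "P * R"] by (simp add: poly_mult[abs_def])
  then have "((\<lambda>t. poly P t * poly R t * (1 - t) powr a * (1 + t) powr b) has_integral 0) {-1..1}"
    using orth unfolding jacobi_integral_def by (simp add: has_integral_integrable_integral)
  from has_integral_mult_right[OF this, of \<sigma>] have int: "(f has_integral 0) (cbox (-1) 1)"
    by (simp add: f_def[abs_def] cbox_interval)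
  have "continuous_on {-1..1} f"
    unfolding fe by (intro continuous_intros jacobi_weight_continuous ab)
  then have cont: "continuous_on (cbox (-1) 1) f" by (simp add: cbox_interval)
  have nonneg: "0 \<le> f t" if "t \<in> box (-1) 1" for t
  proof -
    have "-1 < t" "t < 1" using that by auto
    then have "0 \<le> \<sigma> * (t - r)" using outside unfolding \<sigma>_def by auto
    then have "0 \<le> \<sigma> * (t - r) * (poly R t)\<^sup>2" by simp
    then show ?thesis unfolding fe by simp
  qed
  have ne: "box (-1) (1::real) \<noteq> {}" by simp
  have "poly R t = 0" if "-1 < t" "t < 1" for t
  proof -
    have "f t = 0" using has_integral_0_cbox_imp_0[OF cont nonneg int ne, of t] that by simp
    moreover have "\<sigma> * (t - r) \<noteq> 0" "(1 - t) powr a * (1 + t) powr b > 0"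
      using that outside unfolding \<sigma>_def by auto
    moreover have "t \<noteq> 1" "1 + t \<noteq> 0" using that by auto
    ultimately show ?thesis by (simp add: fe)
  qed
  then have "{-1<..<1::real} \<subseteq> {t. poly R t = 0}" by auto
  then have "finite {-1<..<1::real}" using poly_roots_finite[OF R0] by (rule finite_subset)
  then show False using infinite_Ioo[of "-1::real" 1] by simp
qed

lemma JGL_nodes:
  assumes ab: "a > -1" "b > -1" and N1: "N \<ge> 1" and J: "is_JGL a b N x w"
  shows "\<forall>i\<le>N. -1 \<le> x i \<and> x i \<le> 1" "x 0 = -1" "x N = 1" "inj_on x {0..N}"
    "\<And>i. 0 < i \<Longrightarrow> i \<le> N \<Longrightarrow> x i > -1"
proof -
  obtain m where Nm: "N = Suc m" using N1 by (cases N) auto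
  have sm: "strict_mono_on {0..N} x" and img: "x ` {0..N} = {t. (1 - t\<^sup>2) * poly (pderiv (jacobi_poly a b N)) t = 0}"
    using J unfolding is_JGL_def by auto
  have K: "(real N + a + b + 1)/2 > 0" using ab N1 by simp
  have inZ: "-1 \<le> t \<and> t \<le> 1" if "(1 - t\<^sup>2) * poly (pderiv (jacobi_poly a b N)) t = 0" for t
  proof (cases "1 - t\<^sup>2 = 0")
    case True
    then have "t^2 = 1" by simp
    then have "t = 1 \<or> t = -1" using power2_eq_1_iff by blast
    then show ?thesis by auto
  next
    case False
    then have "poly (pderiv (jacobi_poly a b N)) t = 0" using that by simp
    then have "poly (jacobi_poly (a+1) (b+1) m) t = 0" using K unfolding Nm pderiv_jacobi_poly[OF ab(1)] by simp
    then show ?thesis using jacobi_poly_root_bounds[of "a+1" "b+1" m t] ab by auto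
  qed
  show range: "\<forall>i\<le>N. -1 \<le> x i \<and> x i \<le> 1"
  proof (intro allI impI)
    fix i assume "i \<le> N"
    then have "x i \<in> x ` {0..N}" by auto
    then show "-1 \<le> x i \<and> x i \<le> 1" using img inZ by auto
  qed
  have mono: "x i \<le> x k" if "i \<le> k" "k \<le> N" for i k
  proof (cases "i = k")
    case False
    then have "x i < x k" using that by (intro strict_mono_onD[OF sm]) auto
    then show ?thesis by simp
  qed simp
  have "-1 \<in> x ` {0..N}" using img by simp
  then obtain k where k: "k \<le> N" "x k = -1" by auto
  show x0: "x 0 = -1" using mono[of 0 k] k range N1 by force
  have "1 \<in> x ` {0..N}" using img by simp
  then obtain k' where k': "k' \<le> N" "x k' = 1" by auto
  show "x N = 1" using mono[of k' N] k' range by force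
  show "inj_on x {0..N}" using sm by (rule strict_mono_on_imp_inj_on)
  show "x i > -1" if "0 < i" "i \<le> N" for i
    using strict_mono_onD[OF sm, of 0 i] that x0 by auto
qed

lemma lagrange_basis_props:
  assumes inj: "inj_on x {0..N}" and j: "j \<le> N"
  shows "degree (lagrange_basis x N j) \<le> N"
        "\<And>i. i \<le> N \<Longrightarrow> poly (lagrange_basis x N j) (x i) = (if i = j then 1 else 0)"
proof -
  let ?P = "\<lambda>h. degree h \<le> N \<and> (\<forall>i\<le>N. poly h (x i) = (if i = j then 1 else 0))"
  define S where "S = {0..N} - {j}"
  define L where "L = smult (1 / (\<Prod>k\<in>S. x j - x k)) (\<Prod>k\<in>S. [:- x k, 1:])"
  have cS: "card S = N" using j unfolding S_def by simp
  have nz: "(\<Prod>k\<in>S. x j - x k) \<noteq> 0"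
    using inj j unfolding S_def by (auto simp: inj_on_def)
  have "?P L"
  proof
    have "degree (\<Prod>k\<in>S. [:- x k, 1:]) \<le> N"
      using degree_prod_sum_le[of S "\<lambda>k. [:- x k, 1:]"] cS by (simp add: S_def)
    then show "degree L \<le> N" unfolding L_def by (rule order.trans[OF degree_smult_le])
    show "\<forall>i\<le>N. poly L (x i) = (if i = j then 1 else 0)"
    proof (intro allI impI)
      fix i assume i: "i \<le> N"
      show "poly L (x i) = (if i = j then 1 else 0)"
      proof (cases "i = j")
        case True then show ?thesis using nz unfolding L_def by (simp add: poly_prod)
      next
        case False
        then have "i \<in> S" using i by (simp add: S_def)
        then have "(\<Prod>k\<in>S. poly [:- x k, 1:] (x i)) = 0"
          by (intro prod_zero) (auto simp: S_def)
        then show ?thesis using False unfolding L_def by (simp add: poly_prod)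
      qed
    qed
  qed
  moreover have "h = L" if "?P h" for h
  proof (rule poly_eqI_degree[of "x ` {0..N}"])
    show "poly h y = poly L y" if "y \<in> x ` {0..N}" for y using that \<open>?P h\<close> \<open>?P L\<close> by auto
    have "card (x ` {0..N}) = Suc N" using card_image[OF inj] by simp
    then show "degree h < card (x ` {0..N})" "degree L < card (x ` {0..N})" using \<open>?P h\<close> \<open>?P L\<close> by auto
  qed
  ultimately have "?P (lagrange_basis x N j)" unfolding lagrange_basis_def by (rule theI)
  then show "degree (lagrange_basis x N j) \<le> N"
        "\<And>i. i \<le> N \<Longrightarrow> poly (lagrange_basis x N j) (x i) = (if i = j then 1 else 0)" by auto
qed

section \<open>Expansions of the Lagrange basis\<close>

lemma graded_basis_expansion_exists:
  fixes Q :: "nat \<Rightarrow> real poly"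
  assumes "\<And>k. degree (Q k) = k" "\<And>k. coeff (Q k) k \<noteq> 0"
  shows "degree p \<le> n \<Longrightarrow> \<exists>c. p = (\<Sum>k\<le>n. smult (c k) (Q k))"
proof (induction n arbitrary: p)
  case 0
  then have "p = [:coeff p 0:]" by (metis degree_0_id le_zero_eq)
  moreover have "Q 0 = [:coeff (Q 0) 0:]" using assms(1)[of 0] by (metis degree_0_id)
  ultimately have "p = smult (coeff p 0 / coeff (Q 0) 0) (Q 0)" using assms(2)[of 0]
    by (metis (no_types, lifting) mult.commute nonzero_eq_divide_eq smult_pCons smult_0_right)
  then show ?case by (intro exI[of _ "\<lambda>_. coeff p 0 / coeff (Q 0) 0"]) simp
next
  case (Suc n)
  define c' where "c' = coeff p (Suc n) / coeff (Q (Suc n)) (Suc n)"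
  define r where "r = p - smult c' (Q (Suc n))"
  have "degree r \<le> Suc n" unfolding r_def using Suc.prems assms(1)[of "Suc n"]
    by (intro degree_diff_le) (auto intro: order.trans[OF degree_smult_le])
  moreover have "coeff r (Suc n) = 0" unfolding r_def c'_def using assms(2)[of "Suc n"] by simp
  ultimately have "degree r \<le> n" by (rule degree_le_pred)
  then obtain c where c: "r = (\<Sum>k\<le>n. smult (c k) (Q k))" using Suc.IH by blast
  have "p = (\<Sum>k\<le>Suc n. smult ((c(Suc n := c')) k) (Q k))"
    using c unfolding r_def by (simp add: algebra_simps)
  then show ?case by blast
qed

lemma graded_basis_expansion_unique:
  fixes Q :: "nat \<Rightarrow> real poly"
  assumes "\<And>k. degree (Q k) = k" "\<And>k. coeff (Q k) k \<noteq> 0"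
  shows "(\<Sum>k\<le>n. smult (c k) (Q k)) = 0 \<Longrightarrow> k \<le> n \<Longrightarrow> c k = 0"
proof (induction n arbitrary: k)
  case 0
  have q0: "Q 0 \<noteq> 0" using assms(2)[of 0] by auto
  show ?case using 0 q0 by simp
next
  case (Suc n)
  have "coeff (\<Sum>k\<le>Suc n. smult (c k) (Q k)) (Suc n) = c (Suc n) * coeff (Q (Suc n)) (Suc n)"
  proof -
    have "coeff (\<Sum>k\<le>n. smult (c k) (Q k)) (Suc n) = 0"
      by (rule coeff_eq_0) (rule le_less_trans[OF degree_sum_le], auto intro: order.trans[OF degree_smult_le] simp: assms(1))
    then show ?thesis by (simp add: coeff_sum)
  qed
  moreover have "coeff (\<Sum>k\<le>Suc n. smult (c k) (Q k)) (Suc n) = 0" by (simp only: Suc.prems(1) coeff_0)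
  ultimately have cs: "c (Suc n) = 0" using assms(2)[of "Suc n"] by simp
  then have "(\<Sum>k\<le>n. smult (c k) (Q k)) = 0" using Suc.prems(1) by simp
  then show ?case using Suc.IH Suc.prems(2) cs le_Suc_eq by blast
qed

lemma degree_legendre: "degree (jacobi_poly 0 0 k) = k"
  by (rule degree_jacobi_poly) auto

lemma coeff_legendre_top: "coeff (jacobi_poly 0 0 k) k \<noteq> 0"
  using coeff_jacobi_poly_top[of 0 0 k] jacobi_lead_pos[of 0 0 k] by simp

lemma conn_coeff_legendre:
  assumes ab: "al > -1" "be > -1"
  shows "\<And>t. poly (jacobi_poly al be n) t = (\<Sum>k\<le>n. conn_coeff al be 0 0 k n * poly (jacobi_poly 0 0 k) t)"
    "\<And>k. k > n \<Longrightarrow> conn_coeff al be 0 0 k n = 0"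
proof -
  let ?Pr = "\<lambda>c. (\<forall>t. poly (jacobi_poly al be n) t = (\<Sum>k\<le>n. c k * poly (jacobi_poly 0 0 k) t)) \<and> (\<forall>k>n. c k = 0)"
  obtain c where c: "jacobi_poly al be n = (\<Sum>k\<le>n. smult (c k) (jacobi_poly 0 0 k))"
    using graded_basis_expansion_exists[where Q="jacobi_poly 0 0" and p="jacobi_poly al be n" and n=n] degree_legendre coeff_legendre_top
      degree_jacobi_poly_le[OF ab(1)] by blast
  define c' where "c' k = (if k \<le> n then c k else 0)" for k
  have ex: "?Pr c'"
  proof
    show "\<forall>t. poly (jacobi_poly al be n) t = (\<Sum>k\<le>n. c' k * poly (jacobi_poly 0 0 k) t)"
      by (subst c) (simp add: poly_sum c'_def)
  qed (simp add: c'_def)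
  have un: "d = c'" if "?Pr d" for d
  proof
    fix k
    have "(\<Sum>k\<le>n. smult (d k - c' k) (jacobi_poly 0 0 k)) = 0"
    proof -
      have "poly (\<Sum>k\<le>n. smult (d k - c' k) (jacobi_poly 0 0 k)) = poly 0"
        using that ex by (auto simp: poly_sum algebra_simps sum_subtractf)
      then show ?thesis by (simp add: poly_eq_poly_eq_iff)
    qed
    then have "k \<le> n \<Longrightarrow> d k - c' k = 0"
      using graded_basis_expansion_unique[where Q="jacobi_poly 0 0" and n=n and c="\<lambda>k. d k - c' k" and k=k] degree_legendre coeff_legendre_top by blast
    then show "d k = c' k" using that ex by (cases "k \<le> n") auto
  qed
  have "(THE c. ?Pr c) = c'" using ex un by (rule the_equality)
  then have cc: "conn_coeff al be 0 0 k n = c' k" for k unfolding conn_coeff_def by simp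
  show "\<And>t. poly (jacobi_poly al be n) t = (\<Sum>k\<le>n. conn_coeff al be 0 0 k n * poly (jacobi_poly 0 0 k) t)"
    using ex unfolding cc by blast
  show "\<And>k. k > n \<Longrightarrow> conn_coeff al be 0 0 k n = 0" unfolding cc c'_def by simp
qed

lemma jacobi_gamma_tilde_pos:
  assumes ab: "a > -1" "b > -1" and N1: "N \<ge> 1" and m: "1 \<le> m"
  shows "jacobi_gamma_tilde a b N m > 0"
proof -
  have "(a + b + 1) / real N > -1 / real N" using ab N1 by (intro divide_strict_right_mono) auto
  moreover have "-1 / real N \<ge> -1" using N1 by (simp add: field_simps)
  ultimately have "2 + (a + b + 1) / real N > 0" by linarith
  moreover have "jacobi_gamma a b k > 0" if "k \<ge> 1" for k
    using ab that by (intro jacobi_gamma_pos) auto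
  ultimately show ?thesis unfolding jacobi_gamma_tilde_def using m N1 by auto
qed

definition jacobi_coeff_lagrange :: "real \<Rightarrow> real \<Rightarrow> nat \<Rightarrow> (nat \<Rightarrow> real) \<Rightarrow> (nat \<Rightarrow> real) \<Rightarrow> nat \<Rightarrow> nat \<Rightarrow> real"
  where "jacobi_coeff_lagrange a b N x w n j = w j / jacobi_gamma_tilde a b N n * poly (jacobi_poly a b n) (x j)"

definition legendre_coeff_lagrange_deriv ::
    "real \<Rightarrow> real \<Rightarrow> nat \<Rightarrow> (nat \<Rightarrow> real) \<Rightarrow> (nat \<Rightarrow> real) \<Rightarrow> nat \<Rightarrow> nat \<Rightarrow> real"
  where "legendre_coeff_lagrange_deriv a b N x w l j = 1/2 * (\<Sum>n\<in>{l-1..N}. if n \<ge> 1 then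
           (real n + a + b + 1) * conn_coeff (a + 1) (b + 1) 0 0 (l - 1) (n - 1) * jacobi_coeff_lagrange a b N x w n j
         else 0)"

lemma lagrange_basis_jacobi_expansion:
  assumes ab: "a > -1" "b > -1" and N1: "N \<ge> 1" and J: "is_JGL a b N x w" and j: "j \<le> N"
  obtains c where "lagrange_basis x N j = (\<Sum>n\<le>N. smult (c n) (jacobi_poly a b n))"
    and "\<And>m. 1 \<le> m \<Longrightarrow> m \<le> N \<Longrightarrow> c m = jacobi_coeff_lagrange a b N x w m j"
proof -
  define h where "h = lagrange_basis x N j"
  have inj: "inj_on x {0..N}" using JGL_nodes[OF ab N1 J] by blast
  note hp = lagrange_basis_props[OF inj j, folded h_def]
  obtain c where c: "h = (\<Sum>n\<le>N. smult (c n) (jacobi_poly a b n))"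
    using graded_basis_expansion_exists[where Q="jacobi_poly a b" and p=h and n=N] degree_jacobi_poly[OF ab]
      jacobi_lead_pos[OF ab] coeff_jacobi_poly_top[OF ab(1)] hp(1) by (metis less_irrefl)
  have "c m = jacobi_coeff_lagrange a b N x w m j" if m: "1 \<le> m" "m \<le> N" for m
  proof -
    have "w j * poly (jacobi_poly a b m) (x j)
        = (\<Sum>i\<le>N. if i = j then w j * poly (jacobi_poly a b m) (x j) else 0)"
      using j by simp
    also have "\<dots> = (\<Sum>i\<le>N. w i * poly h (x i) * poly (jacobi_poly a b m) (x i))"
      by (rule sum.cong) (auto simp: hp(2))
    also have "\<dots> = (\<Sum>n\<le>N. c n * (\<Sum>i\<le>N. w i * poly (jacobi_poly a b n) (x i) * poly (jacobi_poly a b m) (x i)))"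
      unfolding c by (simp add: poly_sum sum_distrib_left sum_distrib_right mult_ac) (rule sum.swap)
    also have "\<dots> = (\<Sum>n\<le>N. c n * (if n = m then jacobi_gamma_tilde a b N m else 0))"
      by (rule sum.cong) (simp_all add: JGL_discrete_orthogonality[OF ab N1 J _ m])
    also have "\<dots> = c m * jacobi_gamma_tilde a b N m" using m by (simp add: if_distrib cong: if_cong)
    finally show ?thesis
      using jacobi_gamma_tilde_pos[OF ab N1 m(1)] unfolding jacobi_coeff_lagrange_def by (simp add: field_simps)
  qed
  with c show ?thesis unfolding h_def by (rule that)
qed

lemma sum_from_pred_if_pos:
  fixes X :: "nat \<Rightarrow> real"
  assumes "\<And>n. 1 \<le> n \<Longrightarrow> n < l - 1 \<Longrightarrow> X n = 0"
  shows "(\<Sum>n\<in>{l-1..N}. if 1 \<le> n then X n else 0) = (\<Sum>n\<in>{1..N}. X n)"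
proof -
  have "(\<Sum>n\<in>{l-1..N}. if 1 \<le> n then X n else 0) = (\<Sum>n\<le>N. if 1 \<le> n then X n else 0)"
    using assms by (intro sum.mono_neutral_left) auto
  also have "\<dots> = (\<Sum>n\<in>{1..N}. X n)"
    by (subst sum.inter_filter[symmetric]) (auto intro!: sum.cong)
  finally show ?thesis .
qed

lemma pderiv_lagrange_basis_expansion:
  assumes ab: "a > -1" "b > -1" and N1: "N \<ge> 1" and J: "is_JGL a b N x w" and j: "j \<le> N"
  shows "poly (pderiv (lagrange_basis x N j)) y
         = (\<Sum>l=1..N. legendre_coeff_lagrange_deriv a b N x w l j * poly (jacobi_poly 0 0 (l - 1)) y)"
proof -
  obtain c where c: "lagrange_basis x N j = (\<Sum>n\<le>N. smult (c n) (jacobi_poly a b n))"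
    and cm: "\<And>m. 1 \<le> m \<Longrightarrow> m \<le> N \<Longrightarrow> c m = jacobi_coeff_lagrange a b N x w m j"
    using lagrange_basis_jacobi_expansion[OF ab N1 J j] by blast
  define C where "C k n = conn_coeff (a + 1) (b + 1) 0 0 k n" for k n
  define L where "L k = poly (jacobi_poly 0 0 k) y" for k
  define F where "F n l = (real n + a + b + 1) / 2 * c n * C (l - 1) (n - 1) * L (l - 1)" for n l
  have ab1: "a + 1 > -1" "b + 1 > -1" using ab by auto
  note cp = conn_coeff_legendre[OF ab1]
  have dn: "c n * poly (pderiv (jacobi_poly a b n)) y = (\<Sum>l\<in>{1..N}. F n l)" if n: "1 \<le> n" "n \<le> N" for n
  proof -
    obtain k where k: "n = Suc k" using n by (cases n) auto
    have "poly (pderiv (jacobi_poly a b n)) y = (real n + a + b + 1) / 2 * (\<Sum>i\<le>k. C i k * L i)"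
      unfolding k pderiv_jacobi_poly[OF ab(1)] by (simp add: cp(1) C_def L_def)
    also have "(\<Sum>i\<le>k. C i k * L i) = (\<Sum>i\<le>N - 1. C i k * L i)"
      using n k by (intro sum.mono_neutral_left) (auto simp: C_def cp(2))
    also have "\<dots> = (\<Sum>l\<in>{1..N}. C (l - 1) k * L (l - 1))"
    proof -
      have "(\<Sum>l\<in>{Suc 0..Suc (N - 1)}. C (l - 1) k * L (l - 1)) = (\<Sum>i\<in>{0..N - 1}. C i k * L i)"
        by (subst sum.shift_bounds_cl_Suc_ivl) simp
      then show ?thesis using N1 by (simp add: atLeast0AtMost)
    qed
    finally show ?thesis unfolding F_def k by (simp add: sum_distrib_left mult_ac)
  qed
  have "poly (pderiv (lagrange_basis x N j)) y = (\<Sum>n\<le>N. c n * poly (pderiv (jacobi_poly a b n)) y)"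
    unfolding c by (simp add: pderiv_sum pderiv_smult poly_sum)
  also have "\<dots> = (\<Sum>n\<in>{1..N}. c n * poly (pderiv (jacobi_poly a b n)) y)"
    by (intro sum.mono_neutral_right) (auto simp: jacobi_poly_def)
  also have "\<dots> = (\<Sum>n\<in>{1..N}. \<Sum>l\<in>{1..N}. F n l)" by (rule sum.cong) (simp_all add: dn)
  also have "\<dots> = (\<Sum>l\<in>{1..N}. \<Sum>n\<in>{1..N}. F n l)" by (rule sum.swap)
  also have "\<dots> = (\<Sum>l=1..N. legendre_coeff_lagrange_deriv a b N x w l j * L (l - 1))"
  proof (rule sum.cong[OF refl])
    fix l assume l: "l \<in> {1..N}"
    have "legendre_coeff_lagrange_deriv a b N x w l j
        = 1/2 * (\<Sum>n\<in>{1..N}. (real n + a + b + 1) * C (l - 1) (n - 1) * c n)"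
      unfolding legendre_coeff_lagrange_deriv_def C_def
      by (subst sum_from_pred_if_pos) (auto simp: cp(2) cm intro!: sum.cong)
    then show "(\<Sum>n\<in>{1..N}. F n l) = legendre_coeff_lagrange_deriv a b N x w l j * L (l - 1)"
      unfolding F_def by (simp add: sum_distrib_left sum_distrib_right mult_ac)
  qed
  finally show ?thesis unfolding L_def .
qed

section \<open>Caputo derivatives of polynomials\<close>

lemma legendre_riemann_liouville_coeff:
  assumes r: "\<rho> > 0"
  shows "1 / Gamma \<rho> * jacobi_hyp_coeff 0 0 k m * Beta \<rho> (real m + 1) =
         fact k / Gamma (real k + 1 + \<rho>) * jacobi_hyp_coeff \<rho> (-\<rho>) k m"
proof -
  have g0: "Gamma \<rho> \<noteq> 0" by (metis Gamma_real_pos r less_irrefl)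
  have r1: "\<rho> + 1 > 0" using r by simp
  have g1: "Gamma (\<rho>+1) \<noteq> 0" by (metis Gamma_real_pos r1 less_irrefl)
  have pm: "pochhammer (\<rho>+1) m \<noteq> 0" "pochhammer (\<rho>+1) k \<noteq> 0" using pochhammer_pos[OF r1] by (metis less_irrefl)+
  have gm: "Gamma (real m + 1) = fact m" using Gamma_fact[of m] by (simp add: add.commute)
  have e1: "Gamma (\<rho> + (real m + 1)) = Gamma (\<rho>+1) * pochhammer (\<rho>+1) m"
    using pochhammer_mult_Gamma[OF r1, of m] by (simp add: ac_simps)
  have e2: "Gamma (real k + 1 + \<rho>) = Gamma (\<rho>+1) * pochhammer (\<rho>+1) k"
    using pochhammer_mult_Gamma[OF r1, of k] by (simp add: ac_simps)
  have e3: "real k + \<rho> + - \<rho> + 1 = real k + 0 + 0 + 1" by simp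
  have fk: "(fact k :: real) \<noteq> 0" "(fact m :: real) \<noteq> 0" by auto
  show ?thesis unfolding jacobi_hyp_coeff_def Beta_def gm e1 e2 e3 pochhammer_fact[symmetric]
    using g0 g1 pm fk by (simp add: field_simps flip: pochhammer_fact)
qed

lemma has_integral_riemann_liouville_power:
  assumes x: "x > -1" and r: "\<rho> > 0"
  shows "((\<lambda>y. (x - y) powr (\<rho> - 1) * ((1+y)/2)^m) has_integral
           (Beta \<rho> (real m + 1) * (1+x) powr \<rho> * ((1+x)/2)^m)) {-1..x}"
proof -
  \<comment> \<open>substitute \<open>y = (1 + x) s - 1\<close> in the Beta integral\<close>
  define q where "q = 1 + x"
  have q: "q > 0" using x by (simp add: q_def)
  have B: "((\<lambda>s. s powr (real m + 1 - 1) * (1-s) powr (\<rho>-1)) has_integral Beta (real m + 1) \<rho>) (cbox 0 1)"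
    using has_integral_Beta_real[of "real m + 1" \<rho>] r by simp
  define K where "K = q powr (\<rho> - 1) * q^m / 2^m"
  have B2: "((\<lambda>s. K * (s powr (real m + 1 - 1) * (1-s) powr (\<rho>-1))) has_integral K * Beta (real m + 1) \<rho>) (cbox 0 1)"
    by (rule has_integral_mult_right[OF B])
  have A: "((\<lambda>y. K * (((1/q) * y + 1/q) powr (real m + 1 - 1) * (1 - ((1/q) * y + 1/q)) powr (\<rho>-1)))
       has_integral (K * Beta (real m + 1) \<rho>) / (1/q)) (cbox ((0 - 1/q) / (1/q)) ((1 - 1/q) / (1/q)))"
    using has_integral_affinity'[OF B2, of "1/q" "1/q"] q by (simp add: mult_ac)
  have box: "cbox ((0 - 1/q) / (1/q)) ((1 - 1/q) / (1/q)) = {-1..x}"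
    using q by (simp add: q_def field_simps cbox_interval)
  have val: "(K * Beta (real m + 1) \<rho>) / (1/q) = Beta \<rho> (real m + 1) * (1+x) powr \<rho> * ((1+x)/2)^m"
  proof -
    have "q powr (\<rho> - 1) * q = q powr \<rho>" using q by (simp add: powr_diff)
    then show ?thesis unfolding K_def q_def[symmetric] by (simp add: Beta_commute power_divide field_simps)
  qed
  show ?thesis
  proof (rule has_integral_spike_finite[of "{-1}"])
    show "((\<lambda>y. K * (((1/q) * y + 1/q) powr (real m + 1 - 1) * (1 - ((1/q) * y + 1/q)) powr (\<rho>-1)))
       has_integral (Beta \<rho> (real m + 1) * (1+x) powr \<rho> * ((1+x)/2)^m)) {-1..x}"
      using A unfolding box val .
    fix y assume y: "y \<in> {-1..x} - {-1}"
    then have y1: "y > -1" "y \<le> x" by auto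
    define s where "s = (1+y)/q"
    have s1: "(1/q) * y + 1/q = s" unfolding s_def using q by (simp add: field_simps)
    have s2: "1 - s = (x - y)/q" unfolding s_def q_def using q q_def by (simp add: field_simps)
    have sp: "s > 0" unfolding s_def using y1 q by simp
    have "(x - y) powr (\<rho> - 1) = q powr (\<rho> - 1) * (1 - s) powr (\<rho> - 1)"
    proof -
      have "x - y = q * (1 - s)" using s2 q by simp
      moreover have "(q * (1 - s)) powr (\<rho> - 1) = q powr (\<rho> - 1) * (1 - s) powr (\<rho> - 1)"
        by (rule powr_mult)
      ultimately show ?thesis by simp
    qed
    moreover have "((1+y)/2)^m = q^m / 2^m * s powr (real m)"
      using sp q by (simp add: s_def powr_realpow power_divide field_simps)
    ultimately show "(x - y) powr (\<rho> - 1) * ((1+y)/2)^m =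
       K * (((1/q) * y + 1/q) powr (real m + 1 - 1) * (1 - ((1/q) * y + 1/q)) powr (\<rho>-1))"
      unfolding s1 K_def by (simp add: field_simps)
  qed simp
qed

lemma has_integral_riemann_liouville_legendre:
  assumes x: "x > -1" and r: "0 < \<rho>" "\<rho> < 1"
  shows "((\<lambda>y. (x - y) powr (\<rho> - 1) * poly (jacobi_poly 0 0 k) y) has_integral
           Gamma \<rho> * (fact k / Gamma (real k + 1 + \<rho>) * (1 + x) powr \<rho> * poly (jacobi_poly (-\<rho>) \<rho> k) x))
         {-1..x}"
proof -
  define c where "c m = (-1) ^ k * jacobi_hyp_coeff 0 0 k m" for m
  let ?X = "\<lambda>m. (1 + x) powr \<rho> * ((1 + x) / 2) ^ m"
  have integrand: "(x - y) powr (\<rho> - 1) * poly (jacobi_poly 0 0 k) y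
      = (\<Sum>m\<le>k. c m * ((x - y) powr (\<rho> - 1) * ((1 + y) / 2) ^ m))" for y
    using poly_jacobi_poly_reflect[of 0 0 k y] by (simp add: c_def sum_distrib_left mult_ac)
  have "((\<lambda>y. (x - y) powr (\<rho> - 1) * poly (jacobi_poly 0 0 k) y) has_integral
      (\<Sum>m\<le>k. c m * (Beta \<rho> (real m + 1) * (1 + x) powr \<rho> * ((1 + x) / 2) ^ m))) {-1..x}"
    unfolding integrand
    by (intro has_integral_sum has_integral_mult_right has_integral_riemann_liouville_power x r(1) finite_atMost)
  moreover have "(\<Sum>m\<le>k. c m * (Beta \<rho> (real m + 1) * (1 + x) powr \<rho> * ((1 + x) / 2) ^ m))
      = Gamma \<rho> * (fact k / Gamma (real k + 1 + \<rho>) * (1 + x) powr \<rho> * poly (jacobi_poly (-\<rho>) \<rho> k) x)"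
  proof -
    have "Gamma \<rho> \<noteq> 0" using Gamma_real_pos[OF r(1)] by linarith
    then have coeff: "c m * Beta \<rho> (real m + 1)
        = Gamma \<rho> * (fact k / Gamma (real k + 1 + \<rho>)) * ((-1) ^ k * jacobi_hyp_coeff \<rho> (-\<rho>) k m)" for m
      using legendre_riemann_liouville_coeff[OF r(1), of k m] unfolding c_def by (simp add: field_simps)
    have "(\<Sum>m\<le>k. c m * (Beta \<rho> (real m + 1) * (1 + x) powr \<rho> * ((1 + x) / 2) ^ m))
        = (\<Sum>m\<le>k. (c m * Beta \<rho> (real m + 1)) * ?X m)"
      by (simp add: mult_ac)
    also have "\<dots> = (\<Sum>m\<le>k. Gamma \<rho> * (fact k / Gamma (real k + 1 + \<rho>))
                                * ((-1) ^ k * jacobi_hyp_coeff \<rho> (-\<rho>) k m) * ?X m)"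
      by (simp only: coeff)
    also have "\<dots> = Gamma \<rho> * (fact k / Gamma (real k + 1 + \<rho>) * (1 + x) powr \<rho>
                    * ((-1) ^ k * (\<Sum>m\<le>k. jacobi_hyp_coeff \<rho> (-\<rho>) k m * ((1 + x) / 2) ^ m)))"
      by (simp add: sum_distrib_left mult_ac)
    also have "(-1) ^ k * (\<Sum>m\<le>k. jacobi_hyp_coeff \<rho> (-\<rho>) k m * ((1 + x) / 2) ^ m)
        = poly (jacobi_poly (-\<rho>) \<rho> k) x"
      using poly_jacobi_poly_reflect[of "-\<rho>" \<rho> k x] r by simp
    finally show ?thesis .
  qed
  ultimately show ?thesis by (simp only:)
qed

lemma caputo_poly:
  fixes h :: "real poly"
  assumes mu: "0 < \<mu>" "\<mu> < 1" and x: "x > -1"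
    and hd: "\<And>y. poly (pderiv h) y = (\<Sum>l=1..N. e l * poly (jacobi_poly 0 0 (l - 1)) y)"
  shows "caputo \<mu> (poly h) x = (1 + x) powr (1 - \<mu>) *
     (\<Sum>l=1..N. fact (l - 1) / Gamma (real l + 1 - \<mu>) * e l * poly (jacobi_poly (\<mu> - 1) (1 - \<mu>) (l - 1)) x)"
proof -
  define \<rho> where "\<rho> = 1 - \<mu>"
  have r: "0 < \<rho>" "\<rho> < 1" using mu by (auto simp: \<rho>_def)
  define I where "I l = Gamma \<rho> * (fact (l - 1) / Gamma (real (l - 1) + 1 + \<rho>) * (1 + x) powr \<rho>
                         * poly (jacobi_poly (-\<rho>) \<rho> (l - 1)) x)" for l
  have "deriv (poly h) = poly (pderiv h)"
    by (rule ext) (rule DERIV_imp_deriv[OF poly_DERIV])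
  moreover have "(x - y) powr (\<rho> - 1) * poly (pderiv h) y
      = (\<Sum>l=1..N. e l * ((x - y) powr (\<rho> - 1) * poly (jacobi_poly 0 0 (l - 1)) y))" for y
    unfolding hd by (simp add: sum_distrib_left mult_ac)
  then have "((\<lambda>y. (x - y) powr (\<rho> - 1) * poly (pderiv h) y) has_integral (\<Sum>l=1..N. e l * I l)) {-1..x}"
    unfolding I_def
    by (simp only:) (intro has_integral_sum has_integral_mult_right has_integral_riemann_liouville_legendre x r finite_atLeastAtMost)
  ultimately have "caputo \<mu> (poly h) x = 1 / Gamma \<rho> * (\<Sum>l=1..N. e l * I l)"
    unfolding caputo_def frac_int_def \<rho>_def[symmetric] by (simp add: integral_unique)
  also have "\<dots> = (1 + x) powr \<rho> * (\<Sum>l=1..N. fact (l - 1) / Gamma (real l + 1 - \<mu>) * e l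
                    * poly (jacobi_poly (\<mu> - 1) (1 - \<mu>) (l - 1)) x)"
  proof -
    have "Gamma \<rho> \<noteq> 0" using Gamma_real_pos[OF r(1)] by linarith
    moreover have "real (l - 1) + 1 + \<rho> = real l + 1 - \<mu>" if "l \<in> {1..N}" for l
      using that by (simp add: \<rho>_def of_nat_diff)
    ultimately show ?thesis
      unfolding I_def sum_distrib_left by (intro sum.cong) (simp_all add: \<rho>_def add_diff_eq mult_ac)
  qed
  finally show ?thesis unfolding \<rho>_def .
qed

definition caputo_matrix_expansion ::
    "real \<Rightarrow> (nat \<Rightarrow> real) \<Rightarrow> nat \<Rightarrow> (nat \<Rightarrow> nat \<Rightarrow> real) \<Rightarrow> nat \<Rightarrow> nat \<Rightarrow> real"
  where "caputo_matrix_expansion \<mu> x N s i j = (1 + x i) powr (1 - \<mu>) *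
           (\<Sum>l=1..N. fact (l-1) / Gamma (real l + 1 - \<mu>) * s l j * poly (jacobi_poly (\<mu>-1) (1-\<mu>) (l-1)) (x i))"

section \<open>The Legendre case\<close>

lemma jacobi_integral_0_0: "jacobi_integral 0 0 f = integral {-1..1} f"
  unfolding jacobi_integral_def by (rule integral_spike[of "{-1, 1}"]) auto

lemma legendre_at_1: "poly (jacobi_poly 0 0 m) 1 = 1"
  using poly_jacobi_poly[of 0 0 m 1]
  by (simp add: jacobi_hyp_coeff_def zero_power sum.atMost_shift pochhammer_fact[symmetric])

lemma legendre_at_neg1: "poly (jacobi_poly 0 0 m) (-1) = (-1) ^ m"
  using poly_jacobi_poly_reflect[of 0 0 m "-1"]
  by (simp add: jacobi_hyp_coeff_def zero_power sum.atMost_shift pochhammer_fact[symmetric])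

lemma jacobi_gamma_0_0: "jacobi_gamma 0 0 m = 2 / (2 * real m + 1)"
proof -
  have "Gamma (real m + 0 + 1) = fact m" "Gamma (real m + 0 + 0 + 1) = fact m"
    using Gamma_fact[of m, where 'a=real] by (simp_all add: add.commute)
  then show ?thesis unfolding jacobi_gamma_def by simp
qed

lemma legendre_orthogonality:
  "integral {-1..1} (\<lambda>y. poly (jacobi_poly 0 0 k) y * poly (jacobi_poly 0 0 m) y)
   = (if k = m then 2 / (2 * real m + 1) else 0)"
  using jacobi_poly_orthogonality[of 0 0 m k] by (simp add: jacobi_integral_0_0 jacobi_gamma_0_0)

lemma legendre_expansion_coeff:
  fixes p :: "real poly"
  assumes p: "\<And>y. poly p y = (\<Sum>k=1..N. S k * poly (jacobi_poly 0 0 (k - 1)) y)"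
    and l: "1 \<le> l" "l \<le> N"
  shows "integral {-1..1} (\<lambda>y. poly p y * poly (jacobi_poly 0 0 (l - 1)) y) = 2 / (2 * real l - 1) * S l"
proof -
  let ?P = "\<lambda>k y. poly (jacobi_poly 0 0 k) y"
  have "integral {-1..1} (\<lambda>y. poly p y * ?P (l - 1) y)
      = integral {-1..1} (\<lambda>y. \<Sum>k=1..N. S k * (?P (k - 1) y * ?P (l - 1) y))"
    unfolding p by (simp add: sum_distrib_right mult.assoc)
  also have "\<dots> = (\<Sum>k=1..N. S k * integral {-1..1} (\<lambda>y. ?P (k - 1) y * ?P (l - 1) y))"
    by (subst integral_sum) (auto intro!: integrable_continuous_real continuous_intros)
  also have "\<dots> = (\<Sum>k\<in>{l}. S k * (2 / (2 * real (l - 1) + 1)))"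
    unfolding legendre_orthogonality
    using l by (intro sum.mono_neutral_cong_right) auto
  finally show ?thesis using l by (simp add: of_nat_diff mult.commute)
qed

lemma integral_pderiv_lagrange_basis_mult:
  fixes L :: "real poly"
  assumes N1: "N \<ge> 1" and J: "is_JGL 0 0 N x w" and j: "j \<le> N" and dL: "degree L \<le> N"
  shows "integral {-1..1} (\<lambda>y. poly (pderiv (lagrange_basis x N j)) y * poly L y)
         = poly L 1 * (if j = N then 1 else 0) - poly L (-1) * (if j = 0 then 1 else 0)
           - w j * poly (pderiv L) (x j)"
proof -
  define h where "h = lagrange_basis x N j"
  have z: "(0::real) > -1" by simp
  note nodes = JGL_nodes[OF z z N1 J]
  note hp = lagrange_basis_props[OF nodes(4) j, folded h_def]
  have "((\<lambda>t. poly (pderiv (h * L)) t) has_integral (poly (h * L) 1 - poly (h * L) (-1))) {-1..1}"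
  proof (rule fundamental_theorem_of_calculus)
    show "((\<lambda>x. poly (h * L) x) has_vector_derivative poly (pderiv (h * L)) t) (at t within {-1..1})" for t
      using DERIV_subset[OF poly_DERIV[of "h * L" t], of "{-1..1}"]
      by (simp add: has_real_derivative_iff_has_vector_derivative)
  qed simp
  moreover have "(\<lambda>t. poly (pderiv (h * L)) t) = (\<lambda>y. poly (pderiv h) y * poly L y + poly (h * pderiv L) y)"
    by (rule ext) (simp add: pderiv_mult algebra_simps)
  ultimately have "integral {-1..1} (\<lambda>y. poly (pderiv h) y * poly L y + poly (h * pderiv L) y)
      = poly (h * L) 1 - poly (h * L) (-1)"
    by (simp add: integral_unique)
  moreover have "(\<lambda>y. poly (pderiv h) y * poly L y) integrable_on {-1..1}"
    and "poly (h * pderiv L) integrable_on {-1..1}"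
    by (intro integrable_continuous_real continuous_intros)+
  note integral_add[OF this]
  ultimately have by_parts: "integral {-1..1} (\<lambda>y. poly (pderiv h) y * poly L y)
      = poly (h * L) 1 - poly (h * L) (-1) - integral {-1..1} (poly (h * pderiv L))"
    by linarith
  have "degree (pderiv L) \<le> N - 1" using dL by (simp add: degree_pderiv)
  then have "degree (h * pderiv L) \<le> 2 * N - 1"
    using degree_mult_le[of h "pderiv L"] hp(1) N1 by linarith
  then have "integral {-1..1} (poly (h * pderiv L)) = (\<Sum>i\<le>N. poly (h * pderiv L) (x i) * w i)"
    using is_JGL_quadrature[OF J] by (simp add: jacobi_integral_0_0)
  also have "\<dots> = (\<Sum>i\<le>N. if i = j then w j * poly (pderiv L) (x j) else 0)"
    by (rule sum.cong) (auto simp: hp(2))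
  finally have "integral {-1..1} (poly (h * pderiv L)) = w j * poly (pderiv L) (x j)"
    using j by simp
  moreover have "poly h 1 = (if j = N then 1 else 0)" "poly h (-1) = (if j = 0 then 1 else 0)"
    using hp(2)[of N] hp(2)[of 0] nodes(2,3) by auto
  ultimately show ?thesis unfolding h_def[symmetric] by_parts by simp
qed

definition legendre_coeff_lagrange_deriv_LGL :: "nat \<Rightarrow> (nat \<Rightarrow> real) \<Rightarrow> (nat \<Rightarrow> real) \<Rightarrow> nat \<Rightarrow> nat \<Rightarrow> real"
  where "legendre_coeff_lagrange_deriv_LGL N x w l j = (2 * real l - 1) / 2 *
           ((if j = N then 1 else 0) + (-1) ^ l * (if j = 0 then 1 else 0)
            - w j * poly (pderiv (jacobi_poly 0 0 (l-1))) (x j))"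

lemma legendre_coeff_lagrange_deriv_LGL:
  assumes N1: "N \<ge> 1" and J: "is_JGL 0 0 N x w" and j: "j \<le> N" and l: "1 \<le> l" "l \<le> N"
  shows "legendre_coeff_lagrange_deriv 0 0 N x w l j = legendre_coeff_lagrange_deriv_LGL N x w l j"
proof -
  have z: "(0::real) > -1" by simp
  have "degree (jacobi_poly 0 0 (l - 1)) \<le> N" using l by (simp add: degree_legendre)
  then have R: "2 / (2 * real l - 1) * legendre_coeff_lagrange_deriv 0 0 N x w l j
      = (if j = N then 1 else 0) - (-1) ^ (l - 1) * (if j = 0 then 1 else 0)
        - w j * poly (pderiv (jacobi_poly 0 0 (l - 1))) (x j)"
    using legendre_expansion_coeff[OF pderiv_lagrange_basis_expansion[OF z z N1 J j] l]
      integral_pderiv_lagrange_basis_mult[OF N1 J j]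
    by (simp add: legendre_at_1 legendre_at_neg1)
  have sign: "- ((-1::real) ^ (l - 1)) = (-1) ^ l"
    using l by (cases l) auto
  have "2 * real l - 1 > 0" using l by simp
  then have "legendre_coeff_lagrange_deriv 0 0 N x w l j
      = (2 * real l - 1) / 2 * (2 / (2 * real l - 1) * legendre_coeff_lagrange_deriv 0 0 N x w l j)"
    by simp
  also have "2 / (2 * real l - 1) * legendre_coeff_lagrange_deriv 0 0 N x w l j
      = (if j = N then 1 else 0) + (-1) ^ l * (if j = 0 then 1 else 0)
        - w j * poly (pderiv (jacobi_poly 0 0 (l - 1))) (x j)"
    unfolding R using sign by simp
  finally show ?thesis unfolding legendre_coeff_lagrange_deriv_LGL_def .
qed

lemma tendsto_powr_mult_at_right_neg1:
  fixes G :: "real \<Rightarrow> real"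
  assumes "\<rho> > 0" and "continuous_on UNIV G"
  shows "((\<lambda>t. (1 + t) powr \<rho> * G t) \<longlongrightarrow> 0) (at_right (-1))"
proof -
  have "\<forall>\<^sub>F t in at_right (-1). 0 \<le> 1 + (t::real)"
    using eventually_at_right_less[of "-1::real"] by eventually_elim simp
  moreover have "((\<lambda>t::real. 1 + t) \<longlongrightarrow> 0) (at_right (-1))"
    by (rule tendsto_eq_intros refl)+ simp
  ultimately have "((\<lambda>t::real. (1 + t) powr \<rho>) \<longlongrightarrow> 0 powr \<rho>) (at_right (-1))"
    using assms(1) by (intro tendsto_powr'[OF _ tendsto_const]) auto
  moreover have "(G \<longlongrightarrow> G (-1)) (at_right (-1))"
    using assms(2) by (metis continuous_on_def UNIV_I tendsto_within_subset subset_UNIV)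
  ultimately have "((\<lambda>t. (1 + t) powr \<rho> * G t) \<longlongrightarrow> 0 powr \<rho> * G (-1)) (at_right (-1))"
    by (rule tendsto_mult)
  then show ?thesis using assms(1) by simp
qed

lemma caputo_matrix_eq_expansion:
  assumes ab: "a > -1" "b > -1" and N1: "N \<ge> 1" and J: "is_JGL a b N x w"
    and mu: "0 < \<mu>" "\<mu> < 1" and i: "i \<le> N" and j: "j \<le> N"
    and hd: "\<And>y. poly (pderiv (lagrange_basis x N j)) y = (\<Sum>l=1..N. s l j * poly (jacobi_poly 0 0 (l - 1)) y)"
  shows "caputo_matrix \<mu> x N i j = caputo_matrix_expansion \<mu> x N s i j"
proof -
  define h where "h = lagrange_basis x N j"
  define G where "G t = (\<Sum>l=1..N. fact (l-1) / Gamma (real l + 1 - \<mu>) * s l j * poly (jacobi_poly (\<mu>-1) (1-\<mu>) (l-1)) t)" for t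
  note nd = JGL_nodes[OF ab N1 J]
  have cf: "caputo \<mu> (poly h) t = (1 + t) powr (1 - \<mu>) * G t" if "t > -1" for t
    unfolding G_def h_def by (rule caputo_poly[OF mu that hd])
  show ?thesis
  proof (cases "x i = -1")
    case True
    have ev: "\<forall>\<^sub>F t in at_right (-1). (1 + t) powr (1 - \<mu>) * G t = caputo \<mu> (poly h) t"
      using eventually_at_right_less[of "-1::real"] by eventually_elim (simp add: cf)
    have "continuous_on UNIV G" unfolding G_def by (intro continuous_intros)
    then have "((\<lambda>t. (1 + t) powr (1 - \<mu>) * G t) \<longlongrightarrow> 0) (at_right (-1))"
      using mu by (intro tendsto_powr_mult_at_right_neg1) auto
    then have "((\<lambda>t. caputo \<mu> (poly h) t) \<longlongrightarrow> 0) (at_right (-1))"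
      using ev by (simp add: tendsto_cong)
    then have "Lim (at_right (-1)) (caputo \<mu> (poly h)) = 0"
      by (intro tendsto_Lim) auto
    then show ?thesis unfolding caputo_matrix_def caputo_matrix_expansion_def h_def[symmetric] using True by simp
  next
    case False
    then have "x i > -1" using nd(1) i by force
    then show ?thesis unfolding caputo_matrix_def caputo_matrix_expansion_def h_def[symmetric] using False cf G_def by simp
  qed
qed

theorem theorem3p2:
  fixes N :: nat and \<alpha> \<beta> \<mu> :: real and x \<omega> :: "nat \<Rightarrow> real"
  assumes "N \<ge> 1" and "\<alpha> > -1" and "\<beta> > -1"
    and "is_JGL \<alpha> \<beta> N x \<omega>"
    and "0 < \<mu>" and "\<mu> < 1"
  shows "let t = (\<lambda>n j. \<omega> j / jacobi_gamma_tilde \<alpha> \<beta> N n * poly (jacobi_poly \<alpha> \<beta> n) (x j));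
             s = (\<lambda>l j. 1/2 * (\<Sum>n\<in>{l-1..N}. if n \<ge> 1 then
                     (real n + \<alpha> + \<beta> + 1) * conn_coeff (\<alpha>+1) (\<beta>+1) 0 0 (l-1) (n-1) * t n j
                   else 0));
             s' = (\<lambda>l j. (2 * real l - 1) / 2 *
                    ((if j = N then 1 else 0) + (-1) ^ l * (if j = 0 then 1 else 0)
                     - \<omega> j * poly (pderiv (jacobi_poly 0 0 (l-1))) (x j)));
             rhs = (\<lambda>s i j. (1 + x i) powr (1 - \<mu>) *
                    (\<Sum>l=1..N. fact (l-1) / Gamma (real l + 1 - \<mu>) * s l j
                       * poly (jacobi_poly (\<mu>-1) (1-\<mu>) (l-1)) (x i)))
         in (\<forall>i\<le>N. \<forall>j\<le>N. caputo_matrix \<mu> x N i j = rhs s i j)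
            \<and> (\<alpha> = 0 \<and> \<beta> = 0 \<longrightarrow> (\<forall>i\<le>N. \<forall>j\<le>N. caputo_matrix \<mu> x N i j = rhs s' i j))"
proof -
  have general: "caputo_matrix \<mu> x N i j
      = caputo_matrix_expansion \<mu> x N (legendre_coeff_lagrange_deriv \<alpha> \<beta> N x \<omega>) i j"
    if "i \<le> N" "j \<le> N" for i j
    using assms that by (intro caputo_matrix_eq_expansion pderiv_lagrange_basis_expansion) auto
  have "caputo_matrix \<mu> x N i j
      = caputo_matrix_expansion \<mu> x N (legendre_coeff_lagrange_deriv_LGL N x \<omega>) i j"
    if "\<alpha> = 0" "\<beta> = 0" "i \<le> N" "j \<le> N" for i j
    using general[OF that(3,4)] legendre_coeff_lagrange_deriv_LGL[of N x \<omega> j] assms that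
    unfolding caputo_matrix_expansion_def by (auto intro!: sum.cong)
  with general show ?thesis
    unfolding Let_def caputo_matrix_expansion_def legendre_coeff_lagrange_deriv_def
      jacobi_coeff_lagrange_def legendre_coeff_lagrange_deriv_LGL_def
    by blast
qed

end
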